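(* Let $\mathcal{T}=(V,A,E,f,q,v_0)$ be a decorated pseudo-rooted tree such that $A\setminus A_0\ne\emptyset$. Then $M(\mathcal{T})=M(\mathcal{T}_{A\setminus A_0})$. In particular, if $|A\setminus A_0|=1$ and $\alpha$ is the unique element of $A\setminus A_0$, then $M(\mathcal{T})=M(\mathcal{T}_\alpha)$.
   Context: A graph is a pair $(X_0,X_1)$ of finite sets such that each element of $X_1$ (an edge) is a $2$-element subset of $X_0$; elements of $X_0$ are cells. The valency $\delta_x$ of a cell is the number of edges containing it. A path is a tuple $(x_0,\dots,x_n)$ ($n\ge0$) of cells with $\{x_i,x_{i+1}\}$ an edge for each $i<n$, these edges pairwise distinct; a cell/edge is in the path if it is some $x_i$ / some $\{x_i,x_{i+1}\}$. The graph is a tree if any two cells $x,y$ are joined by a unique path $\gamma_{x,y}$. A decorated tree is $(V,A,E,f,q)$ with $V$ (vertices), $A$ (arrows) finite disjoint sets, $(V\cup A,E)$ a tree, every arrow of valency $1$, $f:A\to\mathbb{Z}$, $q(e,x)\in\mathbb{Z}$ for each $e\in E$, $x\in e$, with $q(e,\alpha)=1$ for $\alpha\in A$, and for each $v\in V$ and distinct edges $e,e'\ni v$, $\gcd(q(e,v),q(e',v))=1$. $A_0=\{\alpha\in A:f(\alpha)=0\}$. An edge $\varepsilon$ is incident to a path $\gamma$ if it is not in $\gamma$ but contains a cell $u$ of $\gamma$; $q(\varepsilon,\gamma):=q(\varepsilon,u)$. For $v\ne\alpha$, $v\in V\cup A$, $\alpha\in A$: $x_{v,\alpha}=f(\alpha)\prod_\varepsilon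 q(\varepsilon,\gamma_{v,\alpha})$ over edges incident to $\gamma_{v,\alpha}$ (empty product $=1$). For $v\in V\cup A_0$, $N_v=\sum_{\alpha\in A\setminus A_0}x_{v,\alpha}$; $M(\mathcal{T})=-\sum_{v\in V\cup A_0}N_v(\delta_v-2)$. A pseudo-root of $(V,A,E,f,q)$ is a vertex $v_0$ with $q(e,v_0)=1$ for all edges $e\ni v_0$, such that for every $v\in V\setminus\{v_0\}$ at most one edge $e\ni v$ not in $\gamma_{v_0,v}$ has $q(e,v)\ne1$. A decorated pseudo-rooted tree is $(V,A,E,f,q,v_0)$ with $v_0$ a pseudo-root. For nonempty $X\subseteq A\setminus A_0$, $\mathcal{T}_X$: let $\mathcal{T}'_X$ have arrow set $X$, vertices those of $\mathcal{T}$ on some $\gamma_{v_0,\alpha}$ ($\alpha\in X$), edges those of $\mathcal{T}$ in some $\gamma_{v_0,\alpha}$ ($\alpha\in X$), decorations as in $\mathcal{T}$; for each vertex $v$ of $\mathcal{T}'_X$ put $b_v=\prod q(e,v)$ over edges $e$ of $\mathcal{T}$ containing $v$ not in $\mathcal{T}'_X$, and if $b_v\ne1$ add an arrow $\alpha_v$ with $f(\alpha_v)=0$ and edge $\{v,\alpha_v\}$ decorated $b_v$ near $v$, $1$ near $\alpha_v$. The result, pseudo-rooted at $v_0$, is $\mathcal{T}_X$; $\mathcal{T}_\alpha:=\mathcal{T}_{\{\alpha\}}$. *)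

theory Defs
  imports Main "HOL-Computational_Algebra.Primes"
begin

definition is_graph :: "'c set \<Rightarrow> 'c set set \<Rightarrow> bool" where
  "is_graph X0 X1 \<longleftrightarrow> finite X0 \<and> finite X1 \<and> (\<forall>e\<in>X1. e \<subseteq> X0 \<and> card e = 2)"

definition valency :: "'c set set \<Rightarrow> 'c \<Rightarrow> nat" where
  "valency X1 x = card {e\<in>X1. x \<in> e}"

definition path_edge_list :: "'c list \<Rightarrow> 'c set list" where
  "path_edge_list p = map (\<lambda>i. {p ! i, p ! Suc i}) [0..<length p - 1]"

definition path_edges :: "'c list \<Rightarrow> 'c set set" where
  "path_edges p = set (path_edge_list p)"

definition is_path :: "'c set \<Rightarrow> 'c set set \<Rightarrow> 'c list \<Rightarrow> bool" where
  "is_path X0 X1 p \<longleftrightarrow> p \<noteq> [] \<and> set p \<subseteq> X0 \<and> set (path_edge_list p) \<subseteq> X1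
     \<and> distinct (path_edge_list p)"

definition is_tree :: "'c set \<Rightarrow> 'c set set \<Rightarrow> bool" where
  "is_tree X0 X1 \<longleftrightarrow> is_graph X0 X1 \<and>
     (\<forall>x\<in>X0. \<forall>y\<in>X0. \<exists>!p. is_path X0 X1 p \<and> hd p = x \<and> last p = y)"

definition gamma :: "'c set \<Rightarrow> 'c set set \<Rightarrow> 'c \<Rightarrow> 'c \<Rightarrow> 'c list" where
  "gamma X0 X1 x y = (THE p. is_path X0 X1 p \<and> hd p = x \<and> last p = y)"

definition decorated_tree ::
  "'c set \<Rightarrow> 'c set \<Rightarrow> 'c set set \<Rightarrow> ('c \<Rightarrow> int) \<Rightarrow> ('c set \<Rightarrow> 'c \<Rightarrow> int) \<Rightarrow> bool" where
  "decorated_tree V A E f q \<longleftrightarrow> finite V \<and> finite A \<and> V \<inter> A = {} \<and> is_tree (V \<union> A) E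
     \<and> (\<forall>\<alpha>\<in>A. valency E \<alpha> = 1)
     \<and> (\<forall>e\<in>E. \<forall>\<alpha>\<in>A. \<alpha> \<in> e \<longrightarrow> q e \<alpha> = 1)
     \<and> (\<forall>v\<in>V. \<forall>e\<in>E. \<forall>e'\<in>E. e \<noteq> e' \<and> v \<in> e \<and> v \<in> e' \<longrightarrow> gcd (q e v) (q e' v) = 1)"

definition A0 :: "'c set \<Rightarrow> ('c \<Rightarrow> int) \<Rightarrow> 'c set" where
  "A0 A f = {\<alpha>\<in>A. f \<alpha> = 0}"

definition incident_edges :: "'c set set \<Rightarrow> 'c list \<Rightarrow> 'c set set" where
  "incident_edges E p = {\<epsilon>\<in>E. \<epsilon> \<notin> path_edges p \<and> \<epsilon> \<inter> set p \<noteq> {}}"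

definition q_path :: "('c set \<Rightarrow> 'c \<Rightarrow> int) \<Rightarrow> 'c set \<Rightarrow> 'c list \<Rightarrow> int" where
  "q_path q \<epsilon> p = q \<epsilon> (THE u. u \<in> \<epsilon> \<and> u \<in> set p)"

definition xcoef ::
  "'c set \<Rightarrow> 'c set \<Rightarrow> 'c set set \<Rightarrow> ('c \<Rightarrow> int) \<Rightarrow> ('c set \<Rightarrow> 'c \<Rightarrow> int) \<Rightarrow> 'c \<Rightarrow> 'c \<Rightarrow> int" where
  "xcoef V A E f q v \<alpha> =
     f \<alpha> * (\<Prod>\<epsilon>\<in>incident_edges E (gamma (V \<union> A) E v \<alpha>). q_path q \<epsilon> (gamma (V \<union> A) E v \<alpha>))"

definition Ncoef ::
  "'c set \<Rightarrow> 'c set \<Rightarrow> 'c set set \<Rightarrow> ('c \<Rightarrow> int) \<Rightarrow> ('c set \<Rightarrow> 'c \<Rightarrow> int) \<Rightarrow> 'c \<Rightarrow> int" where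
  "Ncoef V A E f q v = (\<Sum>\<alpha>\<in>A - A0 A f. xcoef V A E f q v \<alpha>)"

definition Minv ::
  "'c set \<Rightarrow> 'c set \<Rightarrow> 'c set set \<Rightarrow> ('c \<Rightarrow> int) \<Rightarrow> ('c set \<Rightarrow> 'c \<Rightarrow> int) \<Rightarrow> int" where
  "Minv V A E f q = - (\<Sum>v\<in>V \<union> A0 A f. Ncoef V A E f q v * (int (valency E v) - 2))"

definition pseudo_root ::
  "'c set \<Rightarrow> 'c set \<Rightarrow> 'c set set \<Rightarrow> ('c set \<Rightarrow> 'c \<Rightarrow> int) \<Rightarrow> 'c \<Rightarrow> bool" where
  "pseudo_root V A E q v0 \<longleftrightarrow> v0 \<in> V \<and> (\<forall>e\<in>E. v0 \<in> e \<longrightarrow> q e v0 = 1)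
     \<and> (\<forall>v\<in>V - {v0}. card {e\<in>E. v \<in> e \<and> e \<notin> path_edges (gamma (V \<union> A) E v0 v) \<and> q e v \<noteq> 1} \<le> 1)"

definition decorated_pseudo_rooted_tree ::
  "'c set \<Rightarrow> 'c set \<Rightarrow> 'c set set \<Rightarrow> ('c \<Rightarrow> int) \<Rightarrow> ('c set \<Rightarrow> 'c \<Rightarrow> int) \<Rightarrow> 'c \<Rightarrow> bool" where
  "decorated_pseudo_rooted_tree V A E f q v0 \<longleftrightarrow> decorated_tree V A E f q \<and> pseudo_root V A E q v0"

text \<open>Cells of T_X live in the sum type: Inl x is the old cell x, Inr v is the new arrow alpha_v.\<close>

definition subV :: "'c set \<Rightarrow> 'c set \<Rightarrow> 'c set set \<Rightarrow> 'c \<Rightarrow> 'c set \<Rightarrow> 'c set" where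
  "subV V A E v0 X = {v\<in>V. \<exists>\<alpha>\<in>X. v \<in> set (gamma (V \<union> A) E v0 \<alpha>)}"

definition subE :: "'c set \<Rightarrow> 'c set \<Rightarrow> 'c set set \<Rightarrow> 'c \<Rightarrow> 'c set \<Rightarrow> 'c set set" where
  "subE V A E v0 X = (\<Union>\<alpha>\<in>X. path_edges (gamma (V \<union> A) E v0 \<alpha>))"

definition bval ::
  "'c set \<Rightarrow> 'c set \<Rightarrow> 'c set set \<Rightarrow> ('c set \<Rightarrow> 'c \<Rightarrow> int) \<Rightarrow> 'c \<Rightarrow> 'c set \<Rightarrow> 'c \<Rightarrow> int" where
  "bval V A E q v0 X v = (\<Prod>e\<in>{e\<in>E. v \<in> e \<and> e \<notin> subE V A E v0 X}. q e v)"

definition TX_V :: "'c set \<Rightarrow> 'c set \<Rightarrow> 'c set set \<Rightarrow> 'c \<Rightarrow> 'c set \<Rightarrow> ('c + 'c) set" where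
  "TX_V V A E v0 X = Inl ` subV V A E v0 X"

definition TX_A ::
  "'c set \<Rightarrow> 'c set \<Rightarrow> 'c set set \<Rightarrow> ('c set \<Rightarrow> 'c \<Rightarrow> int) \<Rightarrow> 'c \<Rightarrow> 'c set \<Rightarrow> ('c + 'c) set" where
  "TX_A V A E q v0 X = Inl ` X \<union> Inr ` {v\<in>subV V A E v0 X. bval V A E q v0 X v \<noteq> 1}"

definition TX_E ::
  "'c set \<Rightarrow> 'c set \<Rightarrow> 'c set set \<Rightarrow> ('c set \<Rightarrow> 'c \<Rightarrow> int) \<Rightarrow> 'c \<Rightarrow> 'c set \<Rightarrow> ('c + 'c) set set" where
  "TX_E V A E q v0 X = (\<lambda>e. Inl ` e) ` subE V A E v0 X
     \<union> (\<lambda>v. {Inl v, Inr v}) ` {v\<in>subV V A E v0 X. bval V A E q v0 X v \<noteq> 1}"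

definition TX_f :: "('c \<Rightarrow> int) \<Rightarrow> ('c + 'c) \<Rightarrow> int" where
  "TX_f f c = (case c of Inl x \<Rightarrow> f x | Inr v \<Rightarrow> 0)"

definition TX_q ::
  "'c set \<Rightarrow> 'c set \<Rightarrow> 'c set set \<Rightarrow> ('c set \<Rightarrow> 'c \<Rightarrow> int) \<Rightarrow> 'c \<Rightarrow> 'c set
     \<Rightarrow> ('c + 'c) set \<Rightarrow> ('c + 'c) \<Rightarrow> int" where
  "TX_q V A E q v0 X e c = (case c of
       Inl x \<Rightarrow> (if Inr x \<in> e then bval V A E q v0 X x else q (Inl -` e) x)
     | Inr v \<Rightarrow> 1)"

definition M_sub ::
  "'c set \<Rightarrow> 'c set \<Rightarrow> 'c set set \<Rightarrow> ('c \<Rightarrow> int) \<Rightarrow> ('c set \<Rightarrow> 'c \<Rightarrow> int) \<Rightarrow> 'c \<Rightarrow> 'c set \<Rightarrow> int" where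
  "M_sub V A E f q v0 X = Minv (TX_V V A E v0 X) (TX_A V A E q v0 X) (TX_E V A E q v0 X)
      (TX_f f) (TX_q V A E q v0 X)"

end

theory Submission
  imports Defs
begin

(* Write M(T) = - \<Sum>_{\<alpha> \<in> X} \<Sum>_v x_{v,\<alpha>} (\<delta>_v - 2) with X = A - A_0, and compare T with T_X
   for each \<alpha> separately.

   The cells of T outside T'_X form branches hanging off T'_X; orienting them towards v_0 gives
   every such cell c a parent. Along a branch, x_{c,\<alpha>} is the product of the decorations at c of
   the edges away from the parent times a tail factor, and the tail of a child d of c is the tail
   of c times the decorations at c of the edges other than {c,d} and the parent edge. By the
   pseudo-root condition at most one of these decorations differs from 1, and for such a family
   \<Sum>_e \<Prod>_{e' \<noteq> e} q_{e'} = (k - 1) \<Prod>_e q_e + 1. Hence x_{c,\<alpha>} (\<delta>_c - 2) is the sum of the tails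
   of the children of c minus the tail of c, and the sum over all cells outside T'_X telescopes
   to the children of the vertices of T'_X. At such a vertex w what remains is exactly the
   contribution of the new arrow \<alpha>_w decorated by b_w, while the other cells of T_X contribute as
   in T because the paths of T_X towards X are copies of those of T. *)

section \<open>Paths\<close>

lemma path_edge_list_Nil [simp]: "path_edge_list [] = []"
  by (simp add: path_edge_list_def)

lemma path_edge_list_singleton [simp]: "path_edge_list [x] = []"
  by (simp add: path_edge_list_def)

lemma path_edge_list_Cons_Cons [simp]:
  "path_edge_list (x # y # p) = {x, y} # path_edge_list (y # p)"
  unfolding path_edge_list_def by (simp add: upt_conv_Cons map_Suc_upt[symmetric] del: upt_Suc)

lemma path_edge_list_append:
  "path_edge_list (p @ y # p') = path_edge_list (p @ [y]) @ path_edge_list (y # p')"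
  by (induction p rule: induct_list012) auto

lemma path_edge_list_snoc_snoc: "path_edge_list (p @ [y, z]) = path_edge_list (p @ [y]) @ [{y, z}]"
  using path_edge_list_append[of p y "[z]"] by simp

lemma path_edge_subset: "e \<in> set (path_edge_list p) \<Longrightarrow> e \<subseteq> set p"
  by (induction p rule: induct_list012) auto

lemma path_edge_list_rev: "path_edge_list (rev p) = rev (path_edge_list p)"
  by (induction p rule: induct_list012) (auto simp: path_edge_list_snoc_snoc insert_commute)

lemma path_edges_rev [simp]: "path_edges (rev p) = path_edges p"
  by (simp add: path_edges_def path_edge_list_rev)

lemma path_edge_list_map: "path_edge_list (map h p) = map (\<lambda>e. h ` e) (path_edge_list p)"
  by (induction p rule: induct_list012) auto

lemma path_edges_map: "path_edges (map h p) = (\<lambda>e. h ` e) ` path_edges p"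
  by (simp add: path_edges_def path_edge_list_map)

lemma path_edges_Cons_Cons: "path_edges (c # x # p) = insert {c, x} (path_edges (x # p))"
  by (simp add: path_edges_def)

lemma notin_path_edge: "c \<notin> set p \<Longrightarrow> e \<in> path_edges p \<Longrightarrow> c \<notin> e"
  unfolding path_edges_def using path_edge_subset by blast

lemma is_path_singleton [simp]: "is_path X0 X1 [x] \<longleftrightarrow> x \<in> X0"
  by (simp add: is_path_def)

lemma is_path_Cons_Cons:
  "is_path X0 X1 (x # y # p) \<longleftrightarrow>
     x \<in> X0 \<and> {x, y} \<in> X1 \<and> {x, y} \<notin> set (path_edge_list (y # p)) \<and> is_path X0 X1 (y # p)"
  by (auto simp: is_path_def)

lemma is_path_appendD:
  "is_path X0 X1 (p @ y # p') \<Longrightarrow> is_path X0 X1 (p @ [y]) \<and> is_path X0 X1 (y # p')"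
  unfolding is_path_def using path_edge_list_append[of p y p'] by auto

lemma is_path_rev: "is_path X0 X1 (rev p) \<longleftrightarrow> is_path X0 X1 p"
  unfolding is_path_def by (auto simp: path_edge_list_rev)

lemma is_path_interior_edges:
  assumes "is_path X0 X1 (p @ y # p')" "p \<noteq> []" "p' \<noteq> []"
  shows "{last p, y} \<in> X1 \<and> {y, hd p'} \<in> X1 \<and> {last p, y} \<noteq> {y, hd p'}"
proof -
  obtain p0 z where p: "p = p0 @ [z]" using assms(2) by (metis rev_exhaust)
  obtain w p1 where p': "p' = w # p1" using assms(3) by (cases p') auto
  have "path_edge_list (p @ y # p') =
      (path_edge_list (p0 @ [z]) @ [{z, y}]) @ ({y, w} # path_edge_list (w # p1))"
    using path_edge_list_append[of p y p'] by (simp add: p p' path_edge_list_snoc_snoc)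
  then show ?thesis using assms(1) unfolding is_path_def by (auto simp: p p')
qed

lemma valency_one_on_path:
  assumes "finite X1" and p: "is_path X0 X1 p" and a: "a \<in> set p" and "valency X1 a = 1"
  shows "a = hd p \<or> a = last p"
proof (rule ccontr)
  assume "\<not> (a = hd p \<or> a = last p)"
  moreover obtain p1 p2 where s: "p = p1 @ a # p2" using a split_list by metis
  ultimately have "p1 \<noteq> []" "p2 \<noteq> []" by auto
  then have two: "{last p1, a} \<in> X1 \<and> {a, hd p2} \<in> X1 \<and> {last p1, a} \<noteq> {a, hd p2}"
    using is_path_interior_edges p s by metis
  then have "card {{last p1, a}, {a, hd p2}} \<le> card {e\<in>X1. a \<in> e}"
    using \<open>finite X1\<close> by (intro card_mono) auto
  then show False using two \<open>valency X1 a = 1\<close> unfolding valency_def by simp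
qed

lemma doubleton_eq_by_card:
  assumes "card e = 2" "y \<in> e" "u \<in> e" "y \<noteq> u"
  shows "e = {y, u}"
proof -
  obtain a b where "e = {a, b}" using assms(1) by (meson card_2_iff)
  then show ?thesis using assms(2-4) by blast
qed

lemma prod_incident_edges:
  assumes "finite E" and "\<forall>e\<in>E. card e = 2"
    and no_chord: "\<forall>e\<in>E. e \<subseteq> set p \<longrightarrow> e \<in> path_edges p"
  shows "(\<Prod>\<epsilon>\<in>incident_edges E p. q_path q \<epsilon> p)
       = (\<Prod>y\<in>set p. \<Prod>e\<in>{e\<in>E. y \<in> e \<and> e \<notin> path_edges p}. q e y)"
proof -
  let ?F = "\<lambda>y. {e\<in>E. y \<in> e \<and> e \<notin> path_edges p}"
  have unique_cell: "u = y" if "y \<in> set p" "e \<in> ?F y" "u \<in> e" "u \<in> set p" for y u e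
  proof (rule ccontr)
    assume "u \<noteq> y"
    then have "e = {y, u}" using that(2,3) assms(2) by (intro doubleton_eq_by_card) auto
    then have "e \<subseteq> set p" using that(1,4) by simp
    then show False using that(2) no_chord by blast
  qed
  have incident: "incident_edges E p = (\<Union>y\<in>set p. ?F y)"
    unfolding incident_edges_def by blast
  have "(\<Prod>\<epsilon>\<in>incident_edges E p. q_path q \<epsilon> p) = (\<Prod>y\<in>set p. \<Prod>e\<in>?F y. q_path q e p)"
    unfolding incident
  proof (rule prod.UNION_disjoint)
    show "\<forall>y\<in>set p. finite (?F y)" using assms(1) by simp
    show "\<forall>y\<in>set p. \<forall>u\<in>set p. y \<noteq> u \<longrightarrow> ?F y \<inter> ?F u = {}"
      using unique_cell by blast
  qed simp
  also have "\<dots> = (\<Prod>y\<in>set p. \<Prod>e\<in>?F y. q e y)"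
  proof (intro prod.cong refl)
    fix y e assume "y \<in> set p" "e \<in> ?F y"
    then have "(THE u. u \<in> e \<and> u \<in> set p) = y"
      using unique_cell by (intro the_equality) blast+
    then show "q_path q e p = q e y" by (simp add: q_path_def)
  qed
  finally show ?thesis .
qed

lemma sum_prod_Diff_singleton:
  fixes r :: "'a \<Rightarrow> 'b::comm_ring_1"
  assumes "finite F" and "card {e\<in>F. r e \<noteq> 1} \<le> 1"
  shows "(\<Sum>e\<in>F. \<Prod>e'\<in>F - {e}. r e') = (of_nat (card F) - 1) * prod r F + 1"
proof (cases "{e\<in>F. r e \<noteq> 1} = {}")
  case True
  then have "\<And>G. G \<subseteq> F \<Longrightarrow> prod r G = 1" by (intro prod.neutral) blast
  then show ?thesis by simp
next
  case False
  then have "card {e\<in>F. r e \<noteq> 1} \<noteq> 0" using assms(1) by simp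
  then have "card {e\<in>F. r e \<noteq> 1} = 1" using assms(2) by linarith
  then obtain e0 where e0: "{e\<in>F. r e \<noteq> 1} = {e0}" by (rule card_1_singletonE)
  then have "e0 \<in> F" by blast
  have trivial: "prod r G = 1" if "G \<subseteq> F - {e0}" for G
    using that e0 by (intro prod.neutral) blast
  have "prod r F = r e0"
    using prod.remove[OF assms(1) \<open>e0 \<in> F\<close>, of r] trivial[of "F - {e0}"] by simp
  have "(\<Prod>e'\<in>F - {e}. r e') = (if e = e0 then 1 else r e0)" if "e \<in> F" for e
  proof (cases "e = e0")
    case False
    then have "(\<Prod>e'\<in>F - {e}. r e') = r e0 * prod r (F - {e} - {e0})"
      using \<open>e0 \<in> F\<close> assms(1) by (intro prod.remove) auto
    moreover have "prod r (F - {e} - {e0}) = 1" by (rule trivial) blast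
    ultimately show ?thesis using False by simp
  qed (use trivial in simp)
  then have "(\<Sum>e\<in>F. \<Prod>e'\<in>F - {e}. r e') = (\<Sum>e\<in>F. if e = e0 then 1 else r e0)"
    by (rule sum.cong[OF refl])
  also have "\<dots> = 1 + of_nat (card F - 1) * r e0"
    using \<open>e0 \<in> F\<close> assms(1) by (simp add: sum.If_cases Int_absorb1 Diff_eq[symmetric])
  also have "of_nat (card F - 1) = (of_nat (card F) - 1 :: 'b)"
    using \<open>e0 \<in> F\<close> assms(1) by (cases "card F") auto
  finally show ?thesis using \<open>prod r F = r e0\<close> by (simp add: algebra_simps)
qed

section \<open>Trees\<close>

lemma gamma_eqI:
  assumes "is_path X0 X1 p" "hd p = x" "last p = y"
    and "\<And>p'. is_path X0 X1 p' \<Longrightarrow> hd p' = x \<Longrightarrow> last p' = y \<Longrightarrow> p' = p"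
  shows "gamma X0 X1 x y = p"
  unfolding gamma_def using assms by (intro the_equality) blast+

locale tree =
  fixes X0 :: "'c set" and X1 :: "'c set set"
  assumes is_tree: "is_tree X0 X1"
begin

abbreviation \<gamma> where "\<gamma> \<equiv> gamma X0 X1"

lemma finite_cells: "finite X0" and finite_edges: "finite X1"
  and edge_subset: "e \<in> X1 \<Longrightarrow> e \<subseteq> X0" and card_edge: "e \<in> X1 \<Longrightarrow> card e = 2"
  using is_tree unfolding is_tree_def is_graph_def by auto

lemma edge_ends_neq: "{a, b} \<in> X1 \<Longrightarrow> a \<noteq> b"
  using card_edge by fastforce

lemma unique_path:
  "x \<in> X0 \<Longrightarrow> y \<in> X0 \<Longrightarrow> \<exists>!p. is_path X0 X1 p \<and> hd p = x \<and> last p = y"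
  using is_tree unfolding is_tree_def by blast

lemma gamma_path:
  "x \<in> X0 \<Longrightarrow> y \<in> X0 \<Longrightarrow> is_path X0 X1 (\<gamma> x y) \<and> hd (\<gamma> x y) = x \<and> last (\<gamma> x y) = y"
  unfolding gamma_def by (rule theI'[OF unique_path])

lemma gamma_unique:
  assumes p: "is_path X0 X1 p" "hd p = x" "last p = y"
  shows "\<gamma> x y = p"
proof -
  have "x \<in> X0" "y \<in> X0" using p unfolding is_path_def by auto
  then show ?thesis unfolding gamma_def using p by (intro the1_equality[OF unique_path]) auto
qed

lemma gamma_Cons: "x \<in> X0 \<Longrightarrow> y \<in> X0 \<Longrightarrow> \<gamma> x y = x # tl (\<gamma> x y)"
  using gamma_path[of x y] unfolding is_path_def by (cases "\<gamma> x y") auto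

lemma gamma_set_subset: "x \<in> X0 \<Longrightarrow> y \<in> X0 \<Longrightarrow> set (\<gamma> x y) \<subseteq> X0"
  using gamma_path[of x y] unfolding is_path_def by blast

lemma gamma_edges_subset: "x \<in> X0 \<Longrightarrow> y \<in> X0 \<Longrightarrow> set (path_edge_list (\<gamma> x y)) \<subseteq> X1"
  using gamma_path[of x y] unfolding is_path_def by blast

lemma start_in_gamma: "x \<in> X0 \<Longrightarrow> y \<in> X0 \<Longrightarrow> x \<in> set (\<gamma> x y)"
  using gamma_path[of x y] unfolding is_path_def by (cases "\<gamma> x y") auto

lemma path_edges_Cons_gamma:
  assumes "x \<in> X0" "y \<in> X0"
  shows "path_edges (c # \<gamma> x y) = insert {c, x} (path_edges (\<gamma> x y))"
  using path_edges_Cons_Cons[of c x "tl (\<gamma> x y)"] by (simp only: gamma_Cons[OF assms, symmetric])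

lemma gamma_rev: "x \<in> X0 \<Longrightarrow> y \<in> X0 \<Longrightarrow> \<gamma> y x = rev (\<gamma> x y)"
  using gamma_path[of x y] by (intro gamma_unique) (auto simp: is_path_rev hd_rev last_rev)

lemma gamma_distinct:
  assumes xy: "x \<in> X0" "y \<in> X0"
  shows "distinct (\<gamma> x y)"
proof (rule ccontr)
  assume "\<not> distinct (\<gamma> x y)"
  then obtain p z p' p'' where p: "\<gamma> x y = p @ z # p' @ z # p''"
    using not_distinct_decomp by fastforce
  let ?shortcut = "p @ z # p''"
  have "path_edge_list (p @ z # p' @ z # p'') =
      path_edge_list (p @ [z]) @ path_edge_list (z # p' @ [z]) @ path_edge_list (z # p'')"
    using path_edge_list_append[of p z "p' @ z # p''"] path_edge_list_append[of "z # p'" z p''] by simp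
  moreover have "path_edge_list ?shortcut = path_edge_list (p @ [z]) @ path_edge_list (z # p'')"
    by (rule path_edge_list_append)
  moreover have "is_path X0 X1 (p @ z # p' @ z # p'')" using gamma_path[OF xy] p by simp
  ultimately have "is_path X0 X1 ?shortcut" unfolding is_path_def by auto
  moreover have "hd ?shortcut = x" using gamma_path[OF xy] unfolding p by (cases p) auto
  moreover have "last ?shortcut = y" using gamma_path[OF xy] unfolding p by (cases p'') auto
  ultimately have "\<gamma> x y = ?shortcut" by (rule gamma_unique)
  then show False unfolding p by simp
qed

lemma gamma_suffix:
  assumes "x \<in> X0" "y \<in> X0" "\<gamma> x y = p @ a # p'"
  shows "\<gamma> a y = a # p'"
proof (rule gamma_unique)
  show "is_path X0 X1 (a # p')"
    using gamma_path[OF assms(1,2)] is_path_appendD[of X0 X1 p a p'] assms(3) by simp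
  show "last (a # p') = y" using gamma_path[OF assms(1,2)] assms(3) by simp
qed simp

lemma gamma_prefix:
  assumes "x \<in> X0" "y \<in> X0" "\<gamma> x y = p @ a # p'"
  shows "\<gamma> x a = p @ [a]"
proof (rule gamma_unique)
  show "is_path X0 X1 (p @ [a])"
    using gamma_path[OF assms(1,2)] is_path_appendD[of X0 X1 p a p'] assms(3) by simp
  show "hd (p @ [a]) = x" using gamma_path[OF assms(1,2)] assms(3) by (cases p) auto
qed simp

lemma gamma_Cons_neighbour_in:
  assumes cd: "{c, d} \<in> X1" and y: "y \<in> X0" and c: "c \<in> set (\<gamma> d y)"
  shows "\<gamma> d y = d # \<gamma> c y"
proof -
  have d: "d \<in> X0" and "c \<in> X0" and "c \<noteq> d" using edge_subset[OF cd] edge_ends_neq[OF cd] by auto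
  obtain p p' where p: "\<gamma> d y = p @ c # p'" using c split_list by metis
  have "\<gamma> c y = c # p'" using gamma_suffix[OF d y p] .
  obtain p0 where "p = d # p0" using gamma_path[OF d y] p \<open>c \<noteq> d\<close> by (cases p) auto
  then have "d \<notin> set (c # p')" using gamma_distinct[OF d y] p by simp
  then have "{d, c} \<notin> set (path_edge_list (c # p'))" using path_edge_subset by blast
  then have "is_path X0 X1 (d # c # p')"
    using gamma_path[OF \<open>c \<in> X0\<close> y] \<open>\<gamma> c y = c # p'\<close> d cd
    by (simp add: is_path_Cons_Cons insert_commute)
  then have "\<gamma> d y = d # c # p'"
    using gamma_path[OF \<open>c \<in> X0\<close> y] \<open>\<gamma> c y = c # p'\<close> by (intro gamma_unique) auto
  then show ?thesis using \<open>\<gamma> c y = c # p'\<close> by simp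
qed

lemma gamma_Cons_neighbour_notin:
  assumes cd: "{c, d} \<in> X1" and y: "y \<in> X0" and c: "c \<notin> set (\<gamma> d y)"
  shows "\<gamma> c y = c # \<gamma> d y"
proof (rule gamma_unique)
  have d: "d \<in> X0" using edge_subset[OF cd] by auto
  have "{c, d} \<notin> set (path_edge_list (\<gamma> d y))" using c path_edge_subset by blast
  then have "is_path X0 X1 (c # d # tl (\<gamma> d y))"
    unfolding is_path_Cons_Cons using gamma_path[OF d y] edge_subset[OF cd] cd
    by (simp add: gamma_Cons[OF d y, symmetric])
  then show "is_path X0 X1 (c # \<gamma> d y)" by (simp only: gamma_Cons[OF d y, symmetric])
  show "last (c # \<gamma> d y) = y" using gamma_path[OF d y] unfolding is_path_def by simp
qed simp

lemma gamma_walk_subset: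
  assumes "w \<noteq> []" "set w \<subseteq> X0" "set (path_edge_list w) \<subseteq> X1" "z \<in> X0"
  shows "set (\<gamma> (hd w) z) \<subseteq> set w \<union> set (\<gamma> (last w) z)
    \<and> set (path_edge_list (\<gamma> (hd w) z)) \<subseteq> set (path_edge_list w) \<union> set (path_edge_list (\<gamma> (last w) z))"
  using assms
proof (induction w rule: induct_list012)
  case (3 a b w)
  have ab: "{a, b} \<in> X1" and a: "a \<in> X0" and b: "b \<in> X0" using "3.prems" by auto
  have IH: "set (\<gamma> b z) \<subseteq> set (b # w) \<union> set (\<gamma> (last (b # w)) z)
      \<and> set (path_edge_list (\<gamma> b z)) \<subseteq> set (path_edge_list (b # w)) \<union> set (path_edge_list (\<gamma> (last (b # w)) z))"
    using "3.IH"(2) "3.prems" by simp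
  show ?case
  proof (cases "a \<in> set (\<gamma> b z)")
    case True
    then have "\<gamma> b z = b # \<gamma> a z" using gamma_Cons_neighbour_in[OF ab "3.prems"(4)] by simp
    moreover obtain r where "\<gamma> a z = a # r" using gamma_Cons[OF a "3.prems"(4)] by blast
    ultimately show ?thesis using IH by auto
  next
    case False
    then have "\<gamma> a z = a # \<gamma> b z" using gamma_Cons_neighbour_notin[OF ab "3.prems"(4)] by simp
    moreover obtain r where "\<gamma> b z = b # r" using gamma_Cons[OF b "3.prems"(4)] by blast
    ultimately show ?thesis using IH by auto
  qed
qed auto

lemma gamma_triangle:
  assumes "x \<in> X0" "y \<in> X0" "z \<in> X0"
  shows "set (\<gamma> x z) \<subseteq> set (\<gamma> x y) \<union> set (\<gamma> y z)
    \<and> set (path_edge_list (\<gamma> x z)) \<subseteq> set (path_edge_list (\<gamma> x y)) \<union> set (path_edge_list (\<gamma> y z))"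
  using gamma_walk_subset[of "\<gamma> x y" z] gamma_path[OF assms(1,2)] gamma_set_subset[OF assms(1,2)]
    gamma_edges_subset[OF assms(1,2)] assms(3) unfolding is_path_def by auto

lemma gamma_no_chord:
  assumes xy: "x \<in> X0" "y \<in> X0" and e: "e \<in> X1" "e \<subseteq> set (\<gamma> x y)"
  shows "e \<in> path_edges (\<gamma> x y)"
proof -
  have later_neighbour: "{a, b} \<in> path_edges (\<gamma> x y)"
    if p: "\<gamma> x y = p @ a # p'" and "b \<in> set p'" "{a, b} \<in> X1" for p a p' b
  proof -
    have "\<gamma> a y = a # p'" using gamma_suffix[OF xy p] .
    then have "\<gamma> a y = a # \<gamma> b y"
      using gamma_Cons_neighbour_in[of b a y] that xy by (simp add: insert_commute)
    then have "{a, b} \<in> set (path_edge_list (a # p'))"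
      using gamma_Cons[of b y] edge_subset[OF that(3)] xy \<open>\<gamma> a y = a # p'\<close>
      by (metis insert_subset list.inject path_edge_list_Cons_Cons list.set_intros(1))
    then show ?thesis using p path_edge_list_append[of p a p'] by (simp add: path_edges_def)
  qed
  obtain a b where ab: "e = {a, b}" "a \<noteq> b" using card_edge[OF e(1)] by (meson card_2_iff)
  obtain p p' where p: "\<gamma> x y = p @ a # p'" using e ab split_list by (metis insert_subset)
  then have "b \<in> set p \<or> b \<in> set p'" using e ab by auto
  then show ?thesis
  proof
    assume "b \<in> set p"
    then obtain p1 p2 where "p = p1 @ b # p2" using split_list by metis
    then show ?thesis using later_neighbour[of p1 b "p2 @ a # p'" a] p e ab by (simp add: insert_commute)
  qed (use later_neighbour p e ab in simp)
qed

end

section \<open>The subtree spanned by the paths from the pseudo-root to \<open>X\<close>\<close>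

lemma Minv_double_sum:
  "Minv V A E f q
    = - (\<Sum>\<alpha>\<in>A - A0 A f. \<Sum>v\<in>V \<union> A0 A f. xcoef V A E f q v \<alpha> * (int (valency E v) - 2))"
  unfolding Minv_def Ncoef_def sum_distrib_right by (subst sum.swap) (rule refl)

locale pseudo_rooted_tree =
  fixes V A :: "'c set" and E :: "'c set set" and f :: "'c \<Rightarrow> int"
    and q :: "'c set \<Rightarrow> 'c \<Rightarrow> int" and v0 :: 'c
  assumes decorated: "decorated_pseudo_rooted_tree V A E f q v0"
    and nonzero_arrows_nonempty: "A - A0 A f \<noteq> {}"
begin

lemma finite_V: "finite V" and V_A_disjoint: "V \<inter> A = {}"
  and is_tree: "is_tree (V \<union> A) E" and valency_arrow: "\<alpha> \<in> A \<Longrightarrow> valency E \<alpha> = 1"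
  using decorated unfolding decorated_pseudo_rooted_tree_def decorated_tree_def by auto

sublocale tree "V \<union> A" E
  by unfold_locales (rule is_tree)

lemma root_in_V: "v0 \<in> V" and q_root: "e \<in> E \<Longrightarrow> v0 \<in> e \<Longrightarrow> q e v0 = 1"
  and pseudo_root_bound: "v \<in> V \<Longrightarrow> v \<noteq> v0 \<Longrightarrow>
    card {e\<in>E. v \<in> e \<and> e \<notin> path_edges (\<gamma> v0 v) \<and> q e v \<noteq> 1} \<le> 1"
  using decorated unfolding decorated_pseudo_rooted_tree_def pseudo_root_def
  by auto

lemma root_cell: "v0 \<in> V \<union> A"
  using root_in_V by simp

abbreviation "X \<equiv> A - A0 A f"
abbreviation "V\<^sub>X \<equiv> subV V A E v0 X"
abbreviation "E\<^sub>X \<equiv> subE V A E v0 X"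
abbreviation "Out \<equiv> (V \<union> A) - (V\<^sub>X \<union> X)"

lemma f_X: "\<alpha> \<in> X \<Longrightarrow> f \<alpha> \<noteq> 0"
  by (simp add: A0_def)

lemma V_X_subset: "V\<^sub>X \<subseteq> V"
  by (auto simp: subV_def)

lemma finite_V_X: "finite V\<^sub>X"
  using V_X_subset finite_V finite_subset by blast

lemma subtree_cells: "V\<^sub>X \<union> X \<subseteq> V \<union> A"
  using V_X_subset by auto

lemma arrow_edge_unique:
  assumes "\<alpha> \<in> A" "e \<in> E" "\<alpha> \<in> e" "e' \<in> E" "\<alpha> \<in> e'"
  shows "e = e'"
proof -
  have "card {e\<in>E. \<alpha> \<in> e} = 1" using valency_arrow[OF assms(1)] unfolding valency_def .
  then obtain z where z: "{e\<in>E. \<alpha> \<in> e} = {z}" by (rule card_1_singletonE)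
  have "e \<in> {z}" "e' \<in> {z}" using assms(2-5) z[symmetric] by auto
  then show ?thesis by simp
qed

lemma gamma_root_subtree:
  assumes "\<beta> \<in> X"
  shows "set (\<gamma> v0 \<beta>) \<subseteq> V\<^sub>X \<union> X \<and> set (path_edge_list (\<gamma> v0 \<beta>)) \<subseteq> E\<^sub>X"
proof
  have \<beta>: "\<beta> \<in> V \<union> A" using assms by auto
  show "set (\<gamma> v0 \<beta>) \<subseteq> V\<^sub>X \<union> X"
  proof
    fix y assume y: "y \<in> set (\<gamma> v0 \<beta>)"
    show "y \<in> V\<^sub>X \<union> X"
    proof (cases "y \<in> V")
      case True
      then show ?thesis using y assms unfolding subV_def by blast
    next
      case False
      then have "y \<in> A" using y gamma_set_subset[OF root_cell \<beta>] by blast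
      then have "y = v0 \<or> y = \<beta>"
        using valency_one_on_path[OF finite_edges _ y] gamma_path[OF root_cell \<beta>] valency_arrow by metis
      then show ?thesis using False root_in_V assms by blast
    qed
  qed
  show "set (path_edge_list (\<gamma> v0 \<beta>)) \<subseteq> E\<^sub>X"
    using assms unfolding subE_def path_edges_def by blast
qed

lemma root_in_V_X: "v0 \<in> V\<^sub>X"
proof -
  obtain \<beta> where "\<beta> \<in> X" using nonzero_arrows_nonempty by blast
  then show ?thesis using start_in_gamma[OF root_cell] root_in_V unfolding subV_def by blast
qed

lemma gamma_from_root_subtree:
  assumes "a \<in> V\<^sub>X \<union> X"
  shows "set (\<gamma> v0 a) \<subseteq> V\<^sub>X \<union> X \<and> set (path_edge_list (\<gamma> v0 a)) \<subseteq> E\<^sub>X"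
proof (cases "a \<in> X")
  case False
  then obtain \<beta> where \<beta>: "\<beta> \<in> X" and "a \<in> set (\<gamma> v0 \<beta>)" using assms unfolding subV_def by blast
  then obtain p p' where p: "\<gamma> v0 \<beta> = p @ a # p'" using split_list by metis
  have "\<gamma> v0 a = p @ [a]" using gamma_prefix[OF root_cell _ p] \<beta> by blast
  then have "set (\<gamma> v0 a) \<subseteq> set (\<gamma> v0 \<beta>)"
    and "set (path_edge_list (\<gamma> v0 a)) \<subseteq> set (path_edge_list (\<gamma> v0 \<beta>))"
    using p path_edge_list_append[of p a p'] by auto
  then show ?thesis using gamma_root_subtree[OF \<beta>] by blast
qed (use gamma_root_subtree in blast)

lemma gamma_to_root_subtree:
  assumes "a \<in> V\<^sub>X \<union> X"
  shows "set (\<gamma> a v0) \<subseteq> V\<^sub>X \<union> X \<and> set (path_edge_list (\<gamma> a v0)) \<subseteq> E\<^sub>X"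
proof -
  have "a \<in> V \<union> A" using assms subtree_cells by blast
  then show ?thesis
    using gamma_from_root_subtree[OF assms] by (simp add: gamma_rev[OF root_cell] path_edge_list_rev)
qed

lemma gamma_subtree:
  assumes "a \<in> V\<^sub>X \<union> X" and "b \<in> V\<^sub>X \<union> X"
  shows "set (\<gamma> a b) \<subseteq> V\<^sub>X \<union> X \<and> set (path_edge_list (\<gamma> a b)) \<subseteq> E\<^sub>X"
  using gamma_triangle[OF _ root_cell, of a b] assms subtree_cells
    gamma_from_root_subtree[OF assms(2)] gamma_to_root_subtree[OF assms(1)]
  by blast

lemma path_edges_subtree: "a \<in> V\<^sub>X \<union> X \<Longrightarrow> b \<in> V\<^sub>X \<union> X \<Longrightarrow> path_edges (\<gamma> a b) \<subseteq> E\<^sub>X"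
  using gamma_subtree unfolding path_edges_def by blast

lemma E_X_eq: "E\<^sub>X = {e\<in>E. e \<subseteq> V\<^sub>X \<union> X}"
proof (intro equalityI subsetI)
  fix e assume "e \<in> E\<^sub>X"
  then obtain \<beta> where \<beta>: "\<beta> \<in> X" and e: "e \<in> set (path_edge_list (\<gamma> v0 \<beta>))"
    unfolding subE_def path_edges_def by blast
  then have "e \<in> E" using gamma_edges_subset[OF root_cell] by blast
  moreover have "e \<subseteq> V\<^sub>X \<union> X" using path_edge_subset[OF e] gamma_root_subtree[OF \<beta>] by blast
  ultimately show "e \<in> {e\<in>E. e \<subseteq> V\<^sub>X \<union> X}" by blast
next
  fix e assume e: "e \<in> {e\<in>E. e \<subseteq> V\<^sub>X \<union> X}"
  then obtain a b where ab: "e = {a, b}" "a \<noteq> b" using card_edge[of e] by (auto simp: card_2_iff)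
  then have "\<gamma> a b = [a, b]" using e subtree_cells by (intro gamma_unique) (auto simp: is_path_Cons_Cons)
  then show "e \<in> E\<^sub>X" using gamma_subtree[of a b] e ab by auto
qed

lemma finite_E_X: "finite E\<^sub>X"
  using finite_edges E_X_eq by simp

lemma edge_at_X_in_E_X:
  assumes \<alpha>: "\<alpha> \<in> X" and e: "e \<in> E" "\<alpha> \<in> e"
  shows "e \<in> E\<^sub>X"
proof -
  have "\<alpha> \<noteq> v0" using \<alpha> root_in_V V_A_disjoint by auto
  obtain r where r: "\<gamma> v0 \<alpha> = v0 # r" using gamma_Cons[OF root_cell] \<alpha> by blast
  then have "r \<noteq> []" "last r = \<alpha>"
    using gamma_path[OF root_cell, of \<alpha>] \<alpha> \<open>\<alpha> \<noteq> v0\<close> by (auto split: if_splits)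
  then obtain r' where "r = r' @ [\<alpha>]" by (metis append_butlast_last_id)
  moreover obtain p z where "v0 # r' = p @ [z]" by (metis list.distinct(1) rev_exhaust)
  ultimately have "\<gamma> v0 \<alpha> = p @ [z, \<alpha>]" using r by simp
  then have z: "{z, \<alpha>} \<in> E\<^sub>X" using gamma_root_subtree[OF \<alpha>] by (auto simp: path_edge_list_snoc_snoc)
  then have "{z, \<alpha>} \<in> E" by (simp add: E_X_eq)
  then have "e = {z, \<alpha>}" using arrow_edge_unique[of \<alpha> e "{z, \<alpha>}"] \<alpha> e by simp
  then show ?thesis using z by simp
qed

definition parent :: "'c \<Rightarrow> 'c" where "parent c = \<gamma> c v0 ! 1"
definition children :: "'c \<Rightarrow> 'c set" where "children c = {d\<in>Out. parent d = c}"
definition edges_at :: "'c \<Rightarrow> 'c set set" where "edges_at c = {e\<in>E. c \<in> e}"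
definition cut_edges :: "'c \<Rightarrow> 'c set set" where "cut_edges w = {e\<in>E. w \<in> e \<and> e \<notin> E\<^sub>X}"

lemma finite_edges_at: "finite (edges_at c)"
  unfolding edges_at_def using finite_edges by simp

lemma finite_Out: "finite Out"
  using finite_cells by simp

lemma gamma_Out_root:
  assumes c: "c \<in> Out"
  shows "\<gamma> c v0 = c # \<gamma> (parent c) v0" and "{c, parent c} \<in> E" and "parent c \<in> V \<union> A"
    and "c \<notin> set (\<gamma> (parent c) v0)"
proof -
  have c': "c \<in> V \<union> A" and "c \<noteq> v0" using c root_in_V_X by auto
  obtain r where r: "\<gamma> c v0 = c # r" using gamma_Cons[OF c' root_cell] by blast
  have "r \<noteq> []" using gamma_path[OF c' root_cell] r \<open>c \<noteq> v0\<close> by auto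
  then obtain d r' where r': "r = d # r'" by (cases r) auto
  have "parent c = d" unfolding parent_def r r' by simp
  have "\<gamma> d v0 = d # r'" using gamma_suffix[OF c' root_cell, of "[c]"] r r' by simp
  moreover have "is_path (V \<union> A) E (c # d # r')" using gamma_path[OF c' root_cell] r r' by simp
  moreover have "distinct (c # d # r')" using gamma_distinct[OF c' root_cell] r r' by simp
  ultimately show "\<gamma> c v0 = c # \<gamma> (parent c) v0" "{c, parent c} \<in> E" "parent c \<in> V \<union> A"
    "c \<notin> set (\<gamma> (parent c) v0)"
    using r r' \<open>parent c = d\<close> by (auto simp: is_path_Cons_Cons is_path_def)
qed

lemma parent_in_V:
  assumes c: "c \<in> Out"
  shows "parent c \<in> V"
proof (rule ccontr)
  assume "parent c \<notin> V"
  then have "parent c \<in> A" using gamma_Out_root(3)[OF c] by blast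
  have c': "c \<in> V \<union> A" using c by blast
  have "parent c \<in> set (\<gamma> c v0)"
    using gamma_Out_root(1,3)[OF c] start_in_gamma[OF _ root_cell] by simp
  then have "parent c = c \<or> parent c = v0"
    using valency_one_on_path[OF finite_edges _ _ valency_arrow] gamma_path[OF c' root_cell] \<open>parent c \<in> A\<close>
    by metis
  then show False
    using gamma_Out_root(1,3,4)[OF c] start_in_gamma[OF _ root_cell] \<open>parent c \<notin> V\<close> root_in_V
    by auto
qed

lemma gamma_Out:
  assumes c: "c \<in> Out" and \<alpha>: "\<alpha> \<in> X"
  shows "\<gamma> c \<alpha> = c # \<gamma> (parent c) \<alpha>"
proof -
  have "set (\<gamma> (parent c) \<alpha>) \<subseteq> set (\<gamma> (parent c) v0) \<union> set (\<gamma> v0 \<alpha>)"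
    using gamma_triangle[OF gamma_Out_root(3)[OF c] root_cell] \<alpha> by blast
  then have "c \<notin> set (\<gamma> (parent c) \<alpha>)"
    using gamma_Out_root(4)[OF c] gamma_root_subtree[OF \<alpha>] c by blast
  then show ?thesis using gamma_Cons_neighbour_notin[OF gamma_Out_root(2)[OF c]] \<alpha> by blast
qed

lemma parent_eqI:
  assumes "c \<in> Out" and "d \<in> V \<union> A" and "\<gamma> c v0 = c # \<gamma> d v0"
  shows "parent c = d"
  using gamma_Out_root(1,3)[OF assms(1)] gamma_path[OF _ root_cell] assms(2,3) by (metis list.inject)

lemma neighbour_of_Out:
  assumes c: "c \<in> Out" and cd: "{c, d} \<in> E" and "d \<noteq> parent c"
  shows "d \<in> Out \<and> parent d = c"
proof -
  have d: "d \<in> V \<union> A" and c': "c \<in> V \<union> A" and dc: "{d, c} \<in> E"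
    using edge_subset[OF cd] cd by (auto simp: insert_commute)
  have "\<gamma> c v0 \<noteq> c # \<gamma> d v0" using parent_eqI[OF c d] \<open>d \<noteq> parent c\<close> by blast
  then have "c \<in> set (\<gamma> d v0)" using gamma_Cons_neighbour_notin[OF cd root_cell] by blast
  then have "d \<in> Out" using gamma_to_root_subtree c d by blast
  moreover have "d \<notin> set (\<gamma> c v0)"
    using gamma_Cons_neighbour_in[OF dc root_cell] \<open>\<gamma> c v0 \<noteq> c # \<gamma> d v0\<close> by blast
  ultimately show ?thesis
    using gamma_Cons_neighbour_notin[OF dc root_cell] parent_eqI c' by blast
qed

lemma child_edge: "d \<in> children c \<Longrightarrow> {c, d} \<in> E \<and> c \<noteq> d"
  using gamma_Out_root(2) edge_ends_neq unfolding children_def by (fastforce simp: insert_commute)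

lemma inj_on_children_edge: "inj_on (\<lambda>d. {c, d}) (children c)"
  using child_edge by (intro inj_onI) (auto simp: doubleton_eq_iff)

lemma bij_betw_children_Out:
  assumes c: "c \<in> Out"
  shows "bij_betw (\<lambda>d. {c, d}) (children c) (edges_at c - {{c, parent c}})"
proof (rule bij_betw_imageI[OF inj_on_children_edge], intro equalityI subsetI)
  fix e assume "e \<in> (\<lambda>d. {c, d}) ` children c"
  then obtain d where d: "d \<in> children c" "e = {c, d}" by blast
  have "parent c \<noteq> d"
  proof
    assume "parent c = d"
    then have "length (\<gamma> c v0) = length (\<gamma> c v0) + 2"
      using gamma_Out_root(1)[OF c] gamma_Out_root(1)[of d] d(1) unfolding children_def by simp
    then show False by simp
  qed
  then show "e \<in> edges_at c - {{c, parent c}}"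
    using child_edge[OF d(1)] d(2) unfolding edges_at_def by (auto simp: doubleton_eq_iff)
next
  fix e assume e: "e \<in> edges_at c - {{c, parent c}}"
  then obtain d where "e = {c, d}" using card_edge[of e] unfolding edges_at_def card_2_iff by auto
  then show "e \<in> (\<lambda>d. {c, d}) ` children c"
    using neighbour_of_Out[OF c] e unfolding edges_at_def children_def by auto
qed

lemma bij_betw_children_V_X:
  assumes w: "w \<in> V\<^sub>X"
  shows "bij_betw (\<lambda>d. {w, d}) (children w) (cut_edges w)"
proof (rule bij_betw_imageI[OF inj_on_children_edge], intro equalityI subsetI)
  fix e assume "e \<in> (\<lambda>d. {w, d}) ` children w"
  then obtain d where d: "d \<in> children w" "e = {w, d}" by blast
  then have "e \<notin> E\<^sub>X" unfolding E_X_eq children_def by auto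
  then show "e \<in> cut_edges w" using child_edge[OF d(1)] d(2) unfolding cut_edges_def by auto
next
  fix e assume e: "e \<in> cut_edges w"
  then obtain d where ed: "e = {w, d}" using card_edge[of e] unfolding cut_edges_def card_2_iff by auto
  have d: "d \<in> V \<union> A" and dw: "{d, w} \<in> E"
    using e edge_subset ed unfolding cut_edges_def by (auto simp: insert_commute)
  then have "d \<in> Out" using e w ed unfolding cut_edges_def E_X_eq by auto
  moreover have "d \<notin> set (\<gamma> w v0)" using gamma_to_root_subtree[of w] w \<open>d \<in> Out\<close> by blast
  ultimately have "parent d = w"
    using parent_eqI gamma_Cons_neighbour_notin[OF dw root_cell] w V_X_subset by blast
  then show "e \<in> (\<lambda>d. {w, d}) ` children w" using ed \<open>d \<in> Out\<close> unfolding children_def by blast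
qed

lemma card_nontrivial_off_path:
  assumes "v \<in> V" and "F \<subseteq> {e\<in>E. v \<in> e \<and> e \<notin> path_edges (\<gamma> v0 v)}"
  shows "card {e\<in>F. q e v \<noteq> 1} \<le> 1"
proof (cases "v = v0")
  case True
  then have "{e\<in>F. q e v \<noteq> 1} = {}" using assms(2) q_root by auto
  then show ?thesis by (simp only: card.empty le0)
next
  case False
  have "card {e\<in>F. q e v \<noteq> 1} \<le> card {e\<in>E. v \<in> e \<and> e \<notin> path_edges (\<gamma> v0 v) \<and> q e v \<noteq> 1}"
    using assms(2) finite_edges by (intro card_mono) auto
  then show ?thesis using pseudo_root_bound[OF assms(1) False] by linarith
qed

lemma card_nontrivial_Out:
  assumes c: "c \<in> Out"
  shows "card {e\<in>edges_at c - {{c, parent c}}. q e c \<noteq> 1} \<le> 1"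
proof (cases "c \<in> A")
  case True
  then have "edges_at c - {{c, parent c}} = {}"
    using arrow_edge_unique gamma_Out_root(2)[OF c] unfolding edges_at_def by blast
  then have "{e\<in>edges_at c - {{c, parent c}}. q e c \<noteq> 1} = {}" by blast
  then show ?thesis by (simp only: card.empty le0)
next
  case False
  have c': "c \<in> V \<union> A" using c by blast
  have "path_edges (\<gamma> v0 c) = insert {c, parent c} (path_edges (\<gamma> (parent c) v0))"
    using gamma_Out_root(1,3)[OF c] gamma_rev[OF c' root_cell]
    by (metis path_edges_Cons_gamma root_cell path_edges_rev)
  then have "edges_at c - {{c, parent c}} \<subseteq> {e\<in>E. c \<in> e \<and> e \<notin> path_edges (\<gamma> v0 c)}"
    using notin_path_edge[OF gamma_Out_root(4)[OF c]] unfolding edges_at_def by blast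
  then show ?thesis using card_nontrivial_off_path False c by blast
qed

lemma card_nontrivial_cut:
  assumes "w \<in> V\<^sub>X"
  shows "card {e\<in>cut_edges w. q e w \<noteq> 1} \<le> 1"
proof (rule card_nontrivial_off_path)
  show "w \<in> V" using assms V_X_subset by blast
  show "cut_edges w \<subseteq> {e\<in>E. w \<in> e \<and> e \<notin> path_edges (\<gamma> v0 w)}"
    using path_edges_subtree[of v0 w] root_in_V_X assms unfolding cut_edges_def by blast
qed

section \<open>Telescoping along the branches outside the subtree\<close>

abbreviation b :: "'c \<Rightarrow> int" where "b \<equiv> bval V A E q v0 X"

definition side_factor :: "'c set set \<Rightarrow> 'c \<Rightarrow> int" where
  "side_factor P y = (\<Prod>e\<in>{e\<in>E. y \<in> e \<and> e \<notin> P}. q e y)"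

definition inner_side_factor :: "'c set set \<Rightarrow> 'c \<Rightarrow> int" where
  "inner_side_factor P y = (\<Prod>e\<in>{e\<in>E\<^sub>X. y \<in> e \<and> e \<notin> P}. q e y)"

definition xcoef_tail :: "'c \<Rightarrow> 'c \<Rightarrow> int" where
  "xcoef_tail \<alpha> v = f \<alpha> * (\<Prod>y\<in>set (\<gamma> v \<alpha>) - {v}. side_factor (path_edges (\<gamma> v \<alpha>)) y)"

lemma bval_eq: "b y = (\<Prod>e\<in>cut_edges y. q e y)"
  unfolding bval_def cut_edges_def ..

lemma bval_X:
  assumes "\<alpha> \<in> X"
  shows "b \<alpha> = 1"
proof -
  have "cut_edges \<alpha> = {}" using edge_at_X_in_E_X[OF assms] unfolding cut_edges_def by blast
  then show ?thesis by (simp add: bval_eq)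
qed

lemma xcoef_side_factor:
  assumes "v \<in> V \<union> A" "\<alpha> \<in> V \<union> A"
  shows "xcoef V A E f q v \<alpha> = f \<alpha> * (\<Prod>y\<in>set (\<gamma> v \<alpha>). side_factor (path_edges (\<gamma> v \<alpha>)) y)"
proof -
  have "\<forall>e\<in>E. e \<subseteq> set (\<gamma> v \<alpha>) \<longrightarrow> e \<in> path_edges (\<gamma> v \<alpha>)"
    using gamma_no_chord[OF assms] by blast
  then show ?thesis
    using prod_incident_edges[OF finite_edges] card_edge unfolding xcoef_def side_factor_def by simp
qed

lemma xcoef_head_tail:
  assumes "v \<in> V \<union> A" "\<alpha> \<in> V \<union> A"
  shows "xcoef V A E f q v \<alpha> = side_factor (path_edges (\<gamma> v \<alpha>)) v * xcoef_tail \<alpha> v"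
  unfolding xcoef_side_factor[OF assms] xcoef_tail_def
  using prod.remove[OF finite_set start_in_gamma[OF assms], of "side_factor (path_edges (\<gamma> v \<alpha>))"]
  by simp

lemma side_factor_split:
  assumes "P \<subseteq> E\<^sub>X" and "F \<inter> E\<^sub>X = {}"
  shows "side_factor (F \<union> P) y = inner_side_factor P y * (\<Prod>e\<in>cut_edges y - F. q e y)"
proof -
  have split: "{e\<in>E. y \<in> e \<and> e \<notin> F \<union> P} = {e\<in>E\<^sub>X. y \<in> e \<and> e \<notin> P} \<union> (cut_edges y - F)"
    using assms E_X_eq unfolding cut_edges_def by blast
  show ?thesis
    unfolding side_factor_def inner_side_factor_def split
    by (intro prod.union_disjoint) (auto simp: cut_edges_def finite_edges finite_E_X)
qed

lemma side_factor_subtree: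
  "P \<subseteq> E\<^sub>X \<Longrightarrow> side_factor P y = inner_side_factor P y * b y"
  using side_factor_split[of P "{}"] by (simp add: bval_eq)

lemma side_factor_off_path:
  assumes "c \<notin> set p"
  shows "side_factor (F \<union> path_edges p) c = (\<Prod>e\<in>edges_at c - F. q e c)"
proof -
  have "{e\<in>E. c \<in> e \<and> e \<notin> F \<union> path_edges p} = edges_at c - F"
    using notin_path_edge[OF assms] unfolding edges_at_def by blast
  then show ?thesis unfolding side_factor_def by simp
qed

lemma side_factor_insert:
  assumes "y \<notin> e"
  shows "side_factor (insert e P) y = side_factor P y"
proof -
  have "{e'\<in>E. y \<in> e' \<and> e' \<notin> insert e P} = {e'\<in>E. y \<in> e' \<and> e' \<notin> P}" using assms by blast
  then show ?thesis unfolding side_factor_def by simp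
qed

lemma xcoef_tail_Cons:
  assumes c: "c \<in> V \<union> A" and \<alpha>: "\<alpha> \<in> V \<union> A" and "d \<in> V \<union> A"
    and d: "\<gamma> d \<alpha> = d # \<gamma> c \<alpha>"
  shows "xcoef_tail \<alpha> d = side_factor (insert {d, c} (path_edges (\<gamma> c \<alpha>))) c * xcoef_tail \<alpha> c"
proof -
  have "d \<notin> set (\<gamma> c \<alpha>)" using gamma_distinct[OF \<open>d \<in> V \<union> A\<close> \<alpha>] d by simp
  let ?P = "path_edges (\<gamma> c \<alpha>)"
  have "path_edges (\<gamma> d \<alpha>) = insert {d, c} ?P" using d path_edges_Cons_gamma[OF c \<alpha>] by simp
  moreover have "set (\<gamma> d \<alpha>) - {d} = set (\<gamma> c \<alpha>)" using d \<open>d \<notin> set (\<gamma> c \<alpha>)\<close> by auto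
  ultimately have "xcoef_tail \<alpha> d = f \<alpha> * (\<Prod>y\<in>set (\<gamma> c \<alpha>). side_factor (insert {d, c} ?P) y)"
    unfolding xcoef_tail_def by simp
  also have "(\<Prod>y\<in>set (\<gamma> c \<alpha>). side_factor (insert {d, c} ?P) y)
      = side_factor (insert {d, c} ?P) c * (\<Prod>y\<in>set (\<gamma> c \<alpha>) - {c}. side_factor (insert {d, c} ?P) y)"
    by (rule prod.remove[OF finite_set start_in_gamma[OF c \<alpha>]])
  also have "(\<Prod>y\<in>set (\<gamma> c \<alpha>) - {c}. side_factor (insert {d, c} ?P) y)
      = (\<Prod>y\<in>set (\<gamma> c \<alpha>) - {c}. side_factor ?P y)"
    using \<open>d \<notin> set (\<gamma> c \<alpha>)\<close> by (intro prod.cong refl side_factor_insert) auto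
  finally show ?thesis unfolding xcoef_tail_def by (simp add: algebra_simps)
qed

lemma xcoef_Out:
  assumes c: "c \<in> Out" and \<alpha>: "\<alpha> \<in> X"
  shows "xcoef V A E f q c \<alpha> = (\<Prod>e\<in>edges_at c - {{c, parent c}}. q e c) * xcoef_tail \<alpha> c"
proof -
  have "c \<notin> set (\<gamma> (parent c) \<alpha>)"
    using gamma_distinct[of c \<alpha>] gamma_Out[OF c \<alpha>] c \<alpha> by auto
  then have "side_factor (path_edges (\<gamma> c \<alpha>)) c = (\<Prod>e\<in>edges_at c - {{c, parent c}}. q e c)"
    using side_factor_off_path[of c _ "{{c, parent c}}"] gamma_Out[OF c \<alpha>]
      path_edges_Cons_gamma[OF gamma_Out_root(3)[OF c]] \<alpha> by simp
  then show ?thesis using xcoef_head_tail[of c \<alpha>] c \<alpha> by simp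
qed

lemma xcoef_tail_child_Out:
  assumes c: "c \<in> Out" and d: "d \<in> children c" and \<alpha>: "\<alpha> \<in> X"
  shows "xcoef_tail \<alpha> d = (\<Prod>e\<in>edges_at c - {{c, parent c}} - {{c, d}}. q e c) * xcoef_tail \<alpha> c"
proof -
  have "d \<in> Out" "parent d = c" using d unfolding children_def by auto
  have "c \<notin> set (\<gamma> (parent c) \<alpha>)"
    using gamma_distinct[of c \<alpha>] gamma_Out[OF c \<alpha>] c \<alpha> by auto
  then have "side_factor (insert {d, c} (path_edges (\<gamma> c \<alpha>))) c
      = (\<Prod>e\<in>edges_at c - {{c, parent c}} - {{c, d}}. q e c)"
    using side_factor_off_path[of c _ "{{c, d}, {c, parent c}}"] gamma_Out[OF c \<alpha>]
      path_edges_Cons_gamma[OF gamma_Out_root(3)[OF c]] \<alpha>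
    by (simp add: insert_commute Diff_insert2[symmetric])
  then show ?thesis
    using xcoef_tail_Cons[of c \<alpha> d] gamma_Out[OF \<open>d \<in> Out\<close> \<alpha>] \<open>parent d = c\<close> c \<alpha> \<open>d \<in> Out\<close> by simp
qed

lemma xcoef_V_X:
  assumes w: "w \<in> V\<^sub>X" and \<alpha>: "\<alpha> \<in> X"
  shows "xcoef V A E f q w \<alpha> = inner_side_factor (path_edges (\<gamma> w \<alpha>)) w * b w * xcoef_tail \<alpha> w"
  using xcoef_head_tail[of w \<alpha>] side_factor_subtree[OF path_edges_subtree[of w \<alpha>]] w \<alpha> V_X_subset
  by auto

lemma xcoef_tail_child_V_X:
  assumes w: "w \<in> V\<^sub>X" and d: "d \<in> children w" and \<alpha>: "\<alpha> \<in> X"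
  shows "xcoef_tail \<alpha> d
    = inner_side_factor (path_edges (\<gamma> w \<alpha>)) w * (\<Prod>e\<in>cut_edges w - {{w, d}}. q e w) * xcoef_tail \<alpha> w"
proof -
  have "d \<in> Out" "parent d = w" using d unfolding children_def by auto
  have "{d, w} \<notin> E\<^sub>X" using \<open>d \<in> Out\<close> unfolding E_X_eq by auto
  then have "side_factor ({{d, w}} \<union> path_edges (\<gamma> w \<alpha>)) w
      = inner_side_factor (path_edges (\<gamma> w \<alpha>)) w * (\<Prod>e\<in>cut_edges w - {{w, d}}. q e w)"
    using side_factor_split[OF path_edges_subtree[of w \<alpha>], of "{{d, w}}"] w \<alpha>
    by (simp add: insert_commute)
  then show ?thesis
    using xcoef_tail_Cons[of w \<alpha> d] gamma_Out[OF \<open>d \<in> Out\<close> \<alpha>] \<open>parent d = w\<close> w \<alpha> \<open>d \<in> Out\<close>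
      V_X_subset by auto
qed

lemma sum_children_Out:
  assumes c: "c \<in> Out" and \<alpha>: "\<alpha> \<in> X"
  shows "(\<Sum>d\<in>children c. xcoef_tail \<alpha> d)
    = (int (valency E c) - 2) * xcoef V A E f q c \<alpha> + xcoef_tail \<alpha> c"
proof -
  define F where "F = edges_at c - {{c, parent c}}"
  have "finite F" unfolding F_def using finite_edges_at by simp
  have "{c, parent c} \<in> edges_at c" using gamma_Out_root(2)[OF c] unfolding edges_at_def by simp
  then have "card F = card (edges_at c) - 1" and "card (edges_at c) \<noteq> 0"
    using finite_edges_at unfolding F_def by (auto simp: card_Diff_singleton)
  moreover have "valency E c = card (edges_at c)" unfolding valency_def edges_at_def ..
  ultimately have "int (card F) = int (valency E c) - 1" by arith
  have "(\<Sum>d\<in>children c. xcoef_tail \<alpha> d) = (\<Sum>d\<in>children c. (\<Prod>e'\<in>F - {{c, d}}. q e' c) * xcoef_tail \<alpha> c)"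
    using xcoef_tail_child_Out[OF c _ \<alpha>] unfolding F_def by simp
  also have "\<dots> = (\<Sum>e\<in>F. (\<Prod>e'\<in>F - {e}. q e' c)) * xcoef_tail \<alpha> c"
    using sum.reindex_bij_betw[OF bij_betw_children_Out[OF c], of "\<lambda>e. (\<Prod>e'\<in>F - {e}. q e' c) * xcoef_tail \<alpha> c"]
    unfolding F_def by (simp add: sum_distrib_right)
  also have "\<dots> = ((int (card F) - 1) * (\<Prod>e\<in>F. q e c) + 1) * xcoef_tail \<alpha> c"
    using sum_prod_Diff_singleton[OF \<open>finite F\<close>, of "\<lambda>e. q e c"] card_nontrivial_Out[OF c]
    unfolding F_def by simp
  finally show ?thesis
    using xcoef_Out[OF c \<alpha>] \<open>int (card F) = int (valency E c) - 1\<close> unfolding F_def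
    by (simp add: algebra_simps)
qed

lemma sum_children_V_X:
  assumes w: "w \<in> V\<^sub>X" and \<alpha>: "\<alpha> \<in> X"
  shows "(\<Sum>d\<in>children w. xcoef_tail \<alpha> d) = inner_side_factor (path_edges (\<gamma> w \<alpha>)) w
    * ((int (card (cut_edges w)) - 1) * b w + 1) * xcoef_tail \<alpha> w"
proof -
  let ?K = "inner_side_factor (path_edges (\<gamma> w \<alpha>)) w * xcoef_tail \<alpha> w"
  have "finite (cut_edges w)" unfolding cut_edges_def using finite_edges by simp
  have "(\<Sum>d\<in>children w. xcoef_tail \<alpha> d) = (\<Sum>d\<in>children w. (\<Prod>e'\<in>cut_edges w - {{w, d}}. q e' w) * ?K)"
    using xcoef_tail_child_V_X[OF w _ \<alpha>] by (simp add: algebra_simps)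
  also have "\<dots> = (\<Sum>e\<in>cut_edges w. (\<Prod>e'\<in>cut_edges w - {e}. q e' w)) * ?K"
    using sum.reindex_bij_betw[OF bij_betw_children_V_X[OF w], of "\<lambda>e. (\<Prod>e'\<in>cut_edges w - {e}. q e' w) * ?K"]
    by (simp add: sum_distrib_right)
  also have "\<dots> = ((int (card (cut_edges w)) - 1) * b w + 1) * ?K"
    using sum_prod_Diff_singleton[OF \<open>finite (cut_edges w)\<close>, of "\<lambda>e. q e w"] card_nontrivial_cut[OF w]
    by (simp add: bval_eq)
  finally show ?thesis by (simp add: algebra_simps)
qed

lemma sum_children:
  assumes "finite T"
  shows "(\<Sum>c\<in>T. \<Sum>d\<in>children c. h d) = (\<Sum>d\<in>{d\<in>Out. parent d \<in> T}. h d)"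
proof -
  have "(\<Sum>d\<in>(\<Union>c\<in>T. children c). h d) = (\<Sum>c\<in>T. \<Sum>d\<in>children c. h d)"
  proof (rule sum.UNION_disjoint[OF assms])
    show "\<forall>c\<in>T. finite (children c)"
      using finite_Out finite_subset[of "children _" Out] unfolding children_def by blast
    show "\<forall>c\<in>T. \<forall>c'\<in>T. c \<noteq> c' \<longrightarrow> children c \<inter> children c' = {}"
      unfolding children_def by blast
  qed
  moreover have "(\<Union>c\<in>T. children c) = {d\<in>Out. parent d \<in> T}" unfolding children_def by blast
  ultimately show ?thesis by simp
qed

lemma sum_Out:
  assumes \<alpha>: "\<alpha> \<in> X"
  shows "(\<Sum>c\<in>Out. xcoef V A E f q c \<alpha> * (int (valency E c) - 2))
    = - (\<Sum>w\<in>V\<^sub>X. \<Sum>d\<in>children w. xcoef_tail \<alpha> d)"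
proof -
  let ?t = "xcoef_tail \<alpha>"
  let ?P = "{d\<in>Out. parent d \<in> Out}" and ?Q = "{d\<in>Out. parent d \<in> V\<^sub>X}"
  have "(\<Sum>d\<in>Out. ?t d) = (\<Sum>d\<in>?P \<union> ?Q. ?t d)"
    by (intro sum.cong refl) (use parent_in_V V_A_disjoint in blast)
  also have "\<dots> = (\<Sum>d\<in>?P. ?t d) + (\<Sum>d\<in>?Q. ?t d)"
    by (rule sum.union_disjoint) ((rule rev_finite_subset[OF finite_Out], blast)+, blast)
  finally have "(\<Sum>d\<in>Out. ?t d) = (\<Sum>d\<in>?P. ?t d) + (\<Sum>d\<in>?Q. ?t d)" .
  moreover have "(\<Sum>c\<in>Out. xcoef V A E f q c \<alpha> * (int (valency E c) - 2))
      = (\<Sum>c\<in>Out. \<Sum>d\<in>children c. ?t d) - (\<Sum>c\<in>Out. ?t c)"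
    unfolding sum_subtractf[symmetric] using sum_children_Out[OF _ \<alpha>]
    by (intro sum.cong) (auto simp: algebra_simps)
  moreover have "(\<Sum>c\<in>Out. \<Sum>d\<in>children c. ?t d) = (\<Sum>d\<in>?P. ?t d)"
    by (rule sum_children[OF finite_Out])
  moreover have "(\<Sum>w\<in>V\<^sub>X. \<Sum>d\<in>children w. ?t d) = (\<Sum>d\<in>?Q. ?t d)"
    by (rule sum_children[OF finite_V_X])
  ultimately show ?thesis by linarith
qed

lemma cells_V_A0: "V \<union> A0 A f = V\<^sub>X \<union> Out"
  using V_X_subset V_A_disjoint unfolding A0_def by auto

lemma valency_split: "valency E w = card {e\<in>E\<^sub>X. w \<in> e} + card (cut_edges w)"
proof -
  have split: "{e\<in>E. w \<in> e} = {e\<in>E\<^sub>X. w \<in> e} \<union> cut_edges w"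
    using E_X_eq unfolding cut_edges_def by blast
  show ?thesis unfolding valency_def split
    using finite_edges finite_E_X by (intro card_Un_disjoint) (auto simp: cut_edges_def)
qed

lemma sum_cells:
  assumes \<alpha>: "\<alpha> \<in> X"
  shows "(\<Sum>v\<in>V \<union> A0 A f. xcoef V A E f q v \<alpha> * (int (valency E v) - 2))
    = (\<Sum>w\<in>V\<^sub>X. inner_side_factor (path_edges (\<gamma> w \<alpha>)) w * xcoef_tail \<alpha> w
        * (b w * (int (card {e\<in>E\<^sub>X. w \<in> e}) - 1) - 1))"
proof -
  have "(\<Sum>v\<in>V \<union> A0 A f. xcoef V A E f q v \<alpha> * (int (valency E v) - 2))
      = (\<Sum>w\<in>V\<^sub>X. xcoef V A E f q w \<alpha> * (int (valency E w) - 2))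
        + (\<Sum>c\<in>Out. xcoef V A E f q c \<alpha> * (int (valency E c) - 2))"
    unfolding cells_V_A0 using finite_V_X finite_Out by (intro sum.union_disjoint) auto
  also have "\<dots> = (\<Sum>w\<in>V\<^sub>X. xcoef V A E f q w \<alpha> * (int (valency E w) - 2)
      - (\<Sum>d\<in>children w. xcoef_tail \<alpha> d))"
    unfolding sum_Out[OF \<alpha>] by (simp add: sum_subtractf)
  also have "\<dots> = (\<Sum>w\<in>V\<^sub>X. inner_side_factor (path_edges (\<gamma> w \<alpha>)) w * xcoef_tail \<alpha> w
        * (b w * (int (card {e\<in>E\<^sub>X. w \<in> e}) - 1) - 1))"
    using xcoef_V_X[OF _ \<alpha>] sum_children_V_X[OF _ \<alpha>] valency_split
    by (intro sum.cong) (simp_all add: algebra_simps)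
  finally show ?thesis .
qed

section \<open>The tree \<open>T\<^sub>X\<close>\<close>

text \<open>The vertices \<open>w\<close> that receive a new arrow \<open>\<alpha>\<^sub>w\<close>, which is \<open>Inr w\<close> in \<open>T\<^sub>X\<close>.\<close>
abbreviation B :: "'c set" where "B \<equiv> {v\<in>V\<^sub>X. b v \<noteq> 1}"
abbreviation V' where "V' \<equiv> TX_V V A E v0 X"
abbreviation A' where "A' \<equiv> TX_A V A E q v0 X"
abbreviation E' where "E' \<equiv> TX_E V A E q v0 X"
abbreviation f' where "f' \<equiv> TX_f f"
abbreviation q' where "q' \<equiv> TX_q V A E q v0 X"
abbreviation \<gamma>' where "\<gamma>' \<equiv> gamma (V' \<union> A') E'"

lemma inj_on_image_Inl: "inj_on (\<lambda>e. Inl ` e) M"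
  by (rule inj_onI) (simp add: inj_image_eq_iff)

lemma new_edge_not_image: "{Inl v, Inr v} \<noteq> Inl ` e"
proof
  assume "{Inl v, Inr v} = Inl ` e"
  then have "Inr v \<in> Inl ` e" by blast
  then show False by blast
qed

lemma E'_cases:
  assumes "e' \<in> E'"
  obtains (old) e where "e \<in> E\<^sub>X" "e' = Inl ` e" | (new) v where "v \<in> B" "e' = {Inl v, Inr v}"
  using assms unfolding TX_E_def by (elim UnE imageE) simp_all

lemma image_Inl_in_E': "Inl ` e \<in> E' \<longleftrightarrow> e \<in> E\<^sub>X"
proof
  assume "Inl ` e \<in> E'"
  then show "e \<in> E\<^sub>X"
    by (cases rule: E'_cases) (auto simp: inj_image_eq_iff new_edge_not_image[symmetric])
qed (simp add: TX_E_def)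

lemma new_edge_in_E': "{Inl v, Inr v} \<in> E' \<longleftrightarrow> v \<in> B"
proof
  assume "{Inl v, Inr v} \<in> E'"
  then show "v \<in> B"
    by (cases rule: E'_cases) (auto simp: doubleton_eq_iff new_edge_not_image)
qed (simp add: TX_E_def)

lemma edge_at_Inr: "e' \<in> E' \<Longrightarrow> Inr v \<in> e' \<Longrightarrow> e' = {Inl v, Inr v} \<and> v \<in> B"
  by (erule E'_cases) auto

lemma finite_E': "finite E'"
  unfolding TX_E_def using finite_E_X finite_V_X by simp

lemma card_edge_E': "e' \<in> E' \<Longrightarrow> card e' = 2"
  by (erule E'_cases) (auto simp: card_image E_X_eq card_edge)

lemma A0_TX: "A0 A' f' = Inr ` B"
  using f_X unfolding A0_def TX_A_def TX_f_def by auto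

lemma nonzero_arrows_TX: "A' - A0 A' f' = Inl ` X"
  unfolding A0_TX unfolding TX_A_def by blast

lemma Inl_cell_iff: "Inl y \<in> V' \<union> A' \<longleftrightarrow> y \<in> V\<^sub>X \<union> X"
  unfolding TX_V_def TX_A_def by auto

lemma valency_Inr:
  assumes "w \<in> B"
  shows "valency E' (Inr w) = 1"
proof -
  have "{e'\<in>E'. Inr w \<in> e'} = {{Inl w, Inr w}}"
    using edge_at_Inr assms new_edge_in_E' by blast
  then show ?thesis unfolding valency_def by simp
qed

lemma valency_Inl:
  assumes "w \<in> V\<^sub>X"
  shows "valency E' (Inl w) = card {e\<in>E\<^sub>X. w \<in> e} + (if w \<in> B then 1 else 0)"
proof -
  let ?old = "(\<lambda>e. Inl ` e) ` {e\<in>E\<^sub>X. w \<in> e} :: ('c + 'c) set set"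
  have "card ?old = card {e\<in>E\<^sub>X. w \<in> e}" by (rule card_image[OF inj_on_image_Inl])
  moreover have "{e'\<in>E'. Inl w \<in> e'} = ?old \<union> (if w \<in> B then {{Inl w, Inr w}} else {})"
    using assms unfolding TX_E_def by auto
  moreover have "{Inl w, Inr w} \<notin> ?old" using new_edge_not_image by blast
  ultimately show ?thesis unfolding valency_def using finite_E_X by simp
qed

lemma Inr_cell_iff: "Inr w \<in> V' \<union> A' \<longleftrightarrow> w \<in> B"
  unfolding TX_V_def TX_A_def by auto

lemma is_path_map_Inl:
  "is_path (V' \<union> A') E' (map Inl p)
    \<longleftrightarrow> is_path (V \<union> A) E p \<and> set p \<subseteq> V\<^sub>X \<union> X \<and> set (path_edge_list p) \<subseteq> E\<^sub>X"
proof -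
  have "set (map Inl p) \<subseteq> V' \<union> A' \<longleftrightarrow> set p \<subseteq> V\<^sub>X \<union> X" using Inl_cell_iff by auto
  moreover have "set (map (\<lambda>e. Inl ` e) (path_edge_list p)) \<subseteq> E' \<longleftrightarrow> set (path_edge_list p) \<subseteq> E\<^sub>X"
    using image_Inl_in_E' by auto
  moreover have "distinct (map (\<lambda>e. Inl ` e) (path_edge_list p)) \<longleftrightarrow> distinct (path_edge_list p)"
    by (simp add: distinct_map inj_on_image_Inl)
  ultimately show ?thesis
    using subtree_cells E_X_eq unfolding is_path_def path_edge_list_map by auto
qed

lemma path_TX_Inl:
  assumes p: "is_path (V' \<union> A') E' p" and "hd p = Inl w" and "last p = Inl \<alpha>"
  shows "p = map Inl (\<gamma> w \<alpha>)"
proof -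
  have "Inl (projl x) = x" if "x \<in> set p" for x
  proof (cases x)
    case (Inr v)
    then have "v \<in> B" using p that Inr_cell_iff unfolding is_path_def by blast
    then have "x = hd p \<or> x = last p"
      using valency_one_on_path[OF finite_E' p] valency_Inr Inr that by blast
    then show ?thesis using Inr assms by auto
  qed simp
  then have p_Inl: "p = map Inl (map projl p)" by (simp add: map_idI)
  have "p \<noteq> []" using p unfolding is_path_def by simp
  then have "\<gamma> w \<alpha> = map projl p"
    using p p_Inl assms(2,3) is_path_map_Inl[of "map projl p"]
    by (intro gamma_unique) (auto simp: hd_map last_map)
  then show ?thesis using p_Inl by simp
qed

lemma is_path_TX_Inl:
  assumes w: "w \<in> V\<^sub>X \<union> X" and \<alpha>: "\<alpha> \<in> X"
  shows "is_path (V' \<union> A') E' (map Inl (\<gamma> w \<alpha>))"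
  using is_path_map_Inl gamma_subtree[OF w] gamma_path[of w \<alpha>] w \<alpha> subtree_cells by blast

lemma gamma_TX_Inl:
  assumes w: "w \<in> V\<^sub>X \<union> X" and \<alpha>: "\<alpha> \<in> X"
  shows "\<gamma>' (Inl w) (Inl \<alpha>) = map Inl (\<gamma> w \<alpha>)"
proof (rule gamma_eqI[OF is_path_TX_Inl[OF assms]])
  have "\<gamma> w \<alpha> \<noteq> []" "hd (\<gamma> w \<alpha>) = w" "last (\<gamma> w \<alpha>) = \<alpha>"
    using gamma_path[of w \<alpha>] w \<alpha> subtree_cells unfolding is_path_def by auto
  then show "hd (map Inl (\<gamma> w \<alpha>)) = Inl w" "last (map Inl (\<gamma> w \<alpha>)) = Inl \<alpha>"
    by (simp_all add: hd_map last_map)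
qed (rule path_TX_Inl)

lemma gamma_TX_Inr:
  assumes w: "w \<in> B" and \<alpha>: "\<alpha> \<in> X"
  shows "\<gamma>' (Inr w) (Inl \<alpha>) = Inr w # map Inl (\<gamma> w \<alpha>)"
proof (rule gamma_eqI)
  have w': "w \<in> V\<^sub>X \<union> X" using w by blast
  then obtain r where r: "\<gamma> w \<alpha> = w # r" using gamma_Cons subtree_cells \<alpha> by blast
  have "{Inl w, Inr w} \<notin> set (path_edge_list (map Inl (\<gamma> w \<alpha>)))"
    unfolding path_edge_list_map by (auto simp: new_edge_not_image)
  moreover have "{Inl w, Inr w} \<in> E'" using new_edge_in_E' w by simp
  ultimately show "is_path (V' \<union> A') E' (Inr w # map Inl (\<gamma> w \<alpha>))"
    using is_path_TX_Inl[OF w' \<alpha>] Inr_cell_iff w r by (simp add: is_path_Cons_Cons insert_commute)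
  show "last (Inr w # map Inl (\<gamma> w \<alpha>)) = Inl \<alpha>"
    using gamma_path[of w \<alpha>] w' \<alpha> subtree_cells r by (auto simp: last_map)
next
  fix p assume p: "is_path (V' \<union> A') E' p" "hd p = Inr w" "last p = Inl \<alpha>"
  then obtain p'' where "p = Inr w # p''" unfolding is_path_def by (cases p) auto
  moreover have "p'' \<noteq> []" using calculation p(3) by auto
  ultimately obtain y p' where yp: "p = Inr w # y # p'" by (cases p'') auto
  then have "{Inr w, y} \<in> E'" and path: "is_path (V' \<union> A') E' (y # p')"
    using p(1) by (simp_all add: is_path_Cons_Cons)
  then have "y = Inl w" using edge_at_Inr[of "{Inr w, y}" w] by (auto simp: doubleton_eq_iff)
  then show "p = Inr w # map Inl (\<gamma> w \<alpha>)"
    using path_TX_Inl[OF path] yp p(3) by simp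
qed simp

definition side_factor_TX :: "('c + 'c) set set \<Rightarrow> 'c + 'c \<Rightarrow> int" where
  "side_factor_TX P y' = (\<Prod>e'\<in>{e'\<in>E'. y' \<in> e' \<and> e' \<notin> P}. q' e' y')"

lemma q'_image_Inl: "q' (Inl ` e) (Inl y) = q e y"
proof -
  have "Inr y \<notin> (Inl ` e :: ('c + 'c) set)" by blast
  moreover have "Inl -` (Inl ` e :: ('c + 'c) set) = e" by (simp add: inj_vimage_image_eq)
  ultimately show ?thesis unfolding TX_q_def by simp
qed

lemma q'_new_edge: "q' {Inl y, Inr y} (Inl y) = b y"
  unfolding TX_q_def by simp

lemma no_chord_TX:
  assumes w: "w \<in> V\<^sub>X \<union> X" and \<alpha>: "\<alpha> \<in> X" and e': "e' \<in> E'"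
    and sub: "e' \<subseteq> insert (Inr w) (set (map Inl (\<gamma> w \<alpha>)))"
  shows "e' \<in> insert {Inl w, Inr w} (path_edges (map Inl (\<gamma> w \<alpha>)))"
  using e'
proof (cases rule: E'_cases)
  case (old e)
  then have "e \<subseteq> set (\<gamma> w \<alpha>)" using sub by auto
  then have "e \<in> path_edges (\<gamma> w \<alpha>)"
    using gamma_no_chord[of w \<alpha> e] old(1) w \<alpha> subtree_cells E_X_eq by blast
  then show ?thesis using old(2) by (simp add: path_edges_map)
next
  case (new v)
  then show ?thesis using sub by auto
qed

lemma xcoef_TX_side_factor:
  assumes "\<forall>e'\<in>E'. e' \<subseteq> set (\<gamma>' v' \<alpha>') \<longrightarrow> e' \<in> path_edges (\<gamma>' v' \<alpha>')"
  shows "xcoef V' A' E' f' q' v' \<alpha>'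
    = f' \<alpha>' * (\<Prod>y'\<in>set (\<gamma>' v' \<alpha>'). side_factor_TX (path_edges (\<gamma>' v' \<alpha>')) y')"
  using prod_incident_edges[OF finite_E' _ assms] card_edge_E'
  unfolding xcoef_def side_factor_TX_def by simp

lemma edges_TX_at_Inl_off:
  "{e'\<in>E'. Inl y \<in> e' \<and> e' \<notin> (\<lambda>v. {Inl v, Inr v}) ` W \<union> (\<lambda>e. Inl ` e) ` P}
    = (\<lambda>e. Inl ` e) ` {e\<in>E\<^sub>X. y \<in> e \<and> e \<notin> P} \<union> {{Inl y, Inr y}} \<inter> (\<lambda>v. {Inl v, Inr v}) ` (B - W)"
  (is "?L = ?old \<union> ?new")
proof (intro equalityI subsetI)
  fix e' assume "e' \<in> ?L"
  then have e': "e' \<in> E'" "Inl y \<in> e'" "e' \<notin> (\<lambda>v. {Inl v, Inr v}) ` W \<union> (\<lambda>e. Inl ` e) ` P" by auto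
  from e'(1) show "e' \<in> ?old \<union> ?new"
  proof (cases rule: E'_cases)
    case (old e)
    then have "y \<in> e" "e \<notin> P" using e'(2,3) by auto
    then show ?thesis using old by blast
  next
    case (new v)
    then have "v = y" "y \<notin> W" using e'(2,3) by auto
    then show ?thesis using new by blast
  qed
next
  fix e' assume "e' \<in> ?old \<union> ?new"
  then show "e' \<in> ?L"
  proof
    assume "e' \<in> ?old"
    then obtain e where "e \<in> E\<^sub>X" "y \<in> e" "e \<notin> P" "e' = Inl ` e" by blast
    then show ?thesis
      using image_Inl_in_E' by (auto simp: inj_image_eq_iff new_edge_not_image[symmetric])
  next
    assume "e' \<in> ?new"
    then have "y \<in> B" "y \<notin> W" "e' = {Inl y, Inr y}" by (auto simp: doubleton_eq_iff)
    then show ?thesis using new_edge_in_E' by (auto simp: doubleton_eq_iff new_edge_not_image)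
  qed
qed

lemma side_factor_TX_Inl:
  assumes y: "y \<in> V\<^sub>X \<union> X"
  shows "side_factor_TX ((\<lambda>v. {Inl v, Inr v}) ` W \<union> (\<lambda>e. Inl ` e) ` P) (Inl y)
    = inner_side_factor P y * (if y \<in> W then 1 else b y)"
proof -
  let ?old = "(\<lambda>e. Inl ` e) ` {e\<in>E\<^sub>X. y \<in> e \<and> e \<notin> P} :: ('c + 'c) set set"
  let ?new = "{{Inl y, Inr y}} \<inter> (\<lambda>v. {Inl v, Inr v}) ` (B - W)"
  have "?old \<inter> ?new = {}" using new_edge_not_image by blast
  moreover have "(\<Prod>e'\<in>?old. q' e' (Inl y)) = inner_side_factor P y"
    unfolding inner_side_factor_def
    by (simp add: prod.reindex[OF inj_on_image_Inl] q'_image_Inl)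
  moreover have "(\<Prod>e'\<in>?new. q' e' (Inl y)) = (if y \<in> W then 1 else b y)"
  proof (cases "y \<in> B - W")
    case True
    then have "?new = {{Inl y, Inr y}}" by blast
    then show ?thesis using True by (simp add: q'_new_edge)
  next
    case False
    then have "?new = {}" by (auto simp: doubleton_eq_iff)
    then show ?thesis using False y bval_X by auto
  qed
  ultimately show ?thesis
    unfolding side_factor_TX_def edges_TX_at_Inl_off using finite_E_X by (simp add: prod.union_disjoint)
qed

lemma side_factor_TX_Inr:
  assumes "w \<in> B" and "{Inl w, Inr w} \<in> P"
  shows "side_factor_TX P (Inr w) = 1"
proof -
  have none: "{e'\<in>E'. Inr w \<in> e' \<and> e' \<notin> P} = {}" using edge_at_Inr assms(2) by blast
  show ?thesis unfolding side_factor_TX_def none by simp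
qed

lemma xcoef_TX_Inl:
  assumes w: "w \<in> V\<^sub>X" and \<alpha>: "\<alpha> \<in> X"
  shows "xcoef V' A' E' f' q' (Inl w) (Inl \<alpha>) = xcoef V A E f q w \<alpha>"
proof -
  have w': "w \<in> V\<^sub>X \<union> X" and cells: "w \<in> V \<union> A" "\<alpha> \<in> V \<union> A" using w \<alpha> subtree_cells by auto
  let ?P = "path_edges (\<gamma> w \<alpha>)"
  have no_chord: "\<forall>e'\<in>E'. e' \<subseteq> set (\<gamma>' (Inl w) (Inl \<alpha>)) \<longrightarrow> e' \<in> path_edges (\<gamma>' (Inl w) (Inl \<alpha>))"
    using no_chord_TX[OF w' \<alpha>] unfolding gamma_TX_Inl[OF w' \<alpha>] by auto
  have "side_factor_TX (path_edges (map Inl (\<gamma> w \<alpha>))) (Inl y) = side_factor ?P y"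
    if "y \<in> set (\<gamma> w \<alpha>)" for y
    using side_factor_TX_Inl[of y "{}" ?P] side_factor_subtree[OF path_edges_subtree[of w \<alpha>]] w'
      gamma_subtree[OF w'] \<alpha> that
    by (auto simp: path_edges_map)
  then show ?thesis
    using xcoef_TX_side_factor[OF no_chord] xcoef_side_factor[OF cells]
    by (simp add: gamma_TX_Inl[OF w' \<alpha>] TX_f_def prod.reindex)
qed

lemma xcoef_TX_Inr:
  assumes w: "w \<in> B" and \<alpha>: "\<alpha> \<in> X"
  shows "xcoef V' A' E' f' q' (Inr w) (Inl \<alpha>)
    = inner_side_factor (path_edges (\<gamma> w \<alpha>)) w * xcoef_tail \<alpha> w"
proof -
  have w': "w \<in> V\<^sub>X \<union> X" and cells: "w \<in> V \<union> A" "\<alpha> \<in> V \<union> A" using w \<alpha> subtree_cells by auto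
  let ?P = "path_edges (\<gamma> w \<alpha>)"
  let ?Q = "(\<lambda>v. {Inl v, Inr v}) ` {w} \<union> (\<lambda>e. Inl ` e) ` ?P"
  obtain r where r: "\<gamma> w \<alpha> = w # r" using gamma_Cons[OF cells] by blast
  have "path_edges (Inr w # map Inl (\<gamma> w \<alpha>)) = insert {Inr w, Inl w} (path_edges (map Inl (\<gamma> w \<alpha>)))"
    using path_edges_Cons_Cons[of "Inr w" "Inl w" "map Inl r"] r by simp
  then have Q: "path_edges (\<gamma>' (Inr w) (Inl \<alpha>)) = ?Q"
    unfolding gamma_TX_Inr[OF w \<alpha>] by (simp add: path_edges_map insert_commute)
  have no_chord: "\<forall>e'\<in>E'. e' \<subseteq> set (\<gamma>' (Inr w) (Inl \<alpha>)) \<longrightarrow> e' \<in> path_edges (\<gamma>' (Inr w) (Inl \<alpha>))"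
    using no_chord_TX[OF w' \<alpha>] unfolding Q unfolding gamma_TX_Inr[OF w \<alpha>] by (auto simp: path_edges_map)
  have "Inr w \<notin> set (map Inl (\<gamma> w \<alpha>))" by auto
  then have "xcoef V' A' E' f' q' (Inr w) (Inl \<alpha>)
      = f \<alpha> * side_factor_TX ?Q (Inr w) * (\<Prod>y\<in>set (\<gamma> w \<alpha>). side_factor_TX ?Q (Inl y))"
    using xcoef_TX_side_factor[OF no_chord] unfolding Q unfolding gamma_TX_Inr[OF w \<alpha>]
    by (simp add: TX_f_def prod.reindex)
  also have "side_factor_TX ?Q (Inr w) = 1" using side_factor_TX_Inr[OF w] by simp
  also have "(\<Prod>y\<in>set (\<gamma> w \<alpha>). side_factor_TX ?Q (Inl y))
      = (\<Prod>y\<in>set (\<gamma> w \<alpha>). inner_side_factor ?P y * (if y = w then 1 else b y))"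
  proof (intro prod.cong refl)
    fix y assume "y \<in> set (\<gamma> w \<alpha>)"
    then have "y \<in> V\<^sub>X \<union> X" using gamma_subtree[OF w', of \<alpha>] \<alpha> by blast
    then show "side_factor_TX ?Q (Inl y) = inner_side_factor ?P y * (if y = w then 1 else b y)"
      using side_factor_TX_Inl[of y "{w}" ?P] by simp
  qed
  also have "\<dots> = inner_side_factor ?P w
      * (\<Prod>y\<in>set (\<gamma> w \<alpha>) - {w}. inner_side_factor ?P y * (if y = w then 1 else b y))"
    by (subst prod.remove[OF finite_set start_in_gamma[OF cells]]) simp
  also have "(\<Prod>y\<in>set (\<gamma> w \<alpha>) - {w}. inner_side_factor ?P y * (if y = w then 1 else b y))
      = (\<Prod>y\<in>set (\<gamma> w \<alpha>) - {w}. side_factor ?P y)"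
    using side_factor_subtree[OF path_edges_subtree[of w \<alpha>]] w' \<alpha> by (intro prod.cong) auto
  finally show ?thesis unfolding xcoef_tail_def by (simp add: algebra_simps)
qed

lemma sum_cells_TX:
  assumes \<alpha>: "\<alpha> \<in> X"
  shows "(\<Sum>v'\<in>V' \<union> A0 A' f'. xcoef V' A' E' f' q' v' (Inl \<alpha>) * (int (valency E' v') - 2))
    = (\<Sum>w\<in>V\<^sub>X. inner_side_factor (path_edges (\<gamma> w \<alpha>)) w * xcoef_tail \<alpha> w
        * (b w * (int (card {e\<in>E\<^sub>X. w \<in> e}) - 1) - 1))"
proof -
  let ?h = "\<lambda>v'. xcoef V' A' E' f' q' v' (Inl \<alpha>) * (int (valency E' v') - 2)"
  let ?c = "\<lambda>w. inner_side_factor (path_edges (\<gamma> w \<alpha>)) w * xcoef_tail \<alpha> w"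
  have cells: "V' \<union> A0 A' f' = Inl ` V\<^sub>X \<union> Inr ` B" unfolding A0_TX TX_V_def ..
  have "(\<Sum>v'\<in>V' \<union> A0 A' f'. ?h v') = (\<Sum>v'\<in>Inl ` V\<^sub>X. ?h v') + (\<Sum>v'\<in>Inr ` B. ?h v')"
    unfolding cells using finite_V_X by (intro sum.union_disjoint) auto
  also have "\<dots> = (\<Sum>w\<in>V\<^sub>X. ?h (Inl w)) + (\<Sum>w\<in>B. ?h (Inr w))"
    by (simp add: sum.reindex)
  also have "(\<Sum>w\<in>B. ?h (Inr w)) = (\<Sum>w\<in>V\<^sub>X. if b w \<noteq> 1 then - ?c w else 0)"
    using xcoef_TX_Inr[OF _ \<alpha>] valency_Inr finite_V_X by (simp add: sum.inter_filter)
  also have "(\<Sum>w\<in>V\<^sub>X. ?h (Inl w)) + (\<Sum>w\<in>V\<^sub>X. if b w \<noteq> 1 then - ?c w else 0)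
      = (\<Sum>w\<in>V\<^sub>X. ?c w * (b w * (int (card {e\<in>E\<^sub>X. w \<in> e}) - 1) - 1))"
    unfolding sum.distrib[symmetric]
    using xcoef_TX_Inl[OF _ \<alpha>] xcoef_V_X[OF _ \<alpha>] valency_Inl
    by (intro sum.cong) (auto simp: algebra_simps)
  finally show ?thesis .
qed

lemma Minv_eq_M_sub: "Minv V A E f q = M_sub V A E f q v0 X"
proof -
  have "M_sub V A E f q v0 X
      = - (\<Sum>\<alpha>'\<in>Inl ` X. \<Sum>v'\<in>V' \<union> A0 A' f'. xcoef V' A' E' f' q' v' \<alpha>' * (int (valency E' v') - 2))"
    unfolding M_sub_def Minv_double_sum nonzero_arrows_TX ..
  also have "\<dots> = - (\<Sum>\<alpha>\<in>X. \<Sum>v\<in>V \<union> A0 A f. xcoef V A E f q v \<alpha> * (int (valency E v) - 2))"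
    using sum_cells sum_cells_TX by (simp add: sum.reindex)
  finally show ?thesis by (simp add: Minv_double_sum)
qed

end

theorem lemma4p7:
  fixes V A :: "'c set" and E :: "'c set set" and f :: "'c \<Rightarrow> int"
    and q :: "'c set \<Rightarrow> 'c \<Rightarrow> int" and v0 :: 'c
  assumes "decorated_pseudo_rooted_tree V A E f q v0"
    and "A - A0 A f \<noteq> {}"
  shows "Minv V A E f q = M_sub V A E f q v0 (A - A0 A f)
     \<and> (\<forall>\<alpha>. A - A0 A f = {\<alpha>} \<longrightarrow> Minv V A E f q = M_sub V A E f q v0 {\<alpha>})"
proof -
  interpret pseudo_rooted_tree V A E f q v0
    using assms by unfold_locales
  show ?thesis using Minv_eq_M_sub by auto
qed

end
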